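(* In the setting below, the simple regret $r_\Lambda$ of Kometo satisfies, as a function of the budget $\Lambda$ (all other parameters fixed): Under Assumption (a): if $d=0$, $r_\Lambda=\tilde{\mathcal{O}}(\Lambda^{-\alpha})$ (in both the high- and low-budget regimes); if $d>0$, $r_\Lambda=\tilde{\mathcal{O}}(\Lambda^{-\frac{1}{d+1/\alpha}})$ in the high-budget regime and $r_\Lambda=\tilde{\mathcal{O}}(\Lambda^{-1/d}+\Lambda^{-\alpha})$ in the low-budget regime. Under Assumption (b): if $d=0$, $r_\Lambda=e^{\tilde{\mathcal{O}}(-\Lambda^{\beta/(1+\beta)})}$ in the high-budget regime and $r_\Lambda=e^{\tilde{\mathcal{O}}(-\Lambda^{\beta})}+e^{\tilde{\mathcal{O}}(-\Lambda)}$ in the low-budget regime; if $d>0$, $r_\Lambda=\tilde{\mathcal{O}}(\Lambda^{-1/d})$ in both regimes. Under Assumption (c): $r_\Lambda=e^{\tilde{\mathcal{O}}(-\Lambda)}$ if $d=0$ and $r_\Lambda=\tilde{\mathcal{O}}(\Lambda^{-1/d})$ if $d>0$.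
   Context: Setting: $\mathcal{X}$ has a hierarchical partitioning $\mathcal{P}=(\mathcal{P}_{h,i})$ with branching factor $K\ge2$ ($\mathcal{P}_{0,0}=\mathcal{X}$, the children $\mathcal{P}_{h+1,Ki+l}$, $0\le l\le K-1$, partition $\mathcal{P}_{h,i}$; each cell has a representative $x_{h,i}$). $\nu>0$, $\rho\in(0,1)$, $L=\log(1/\rho)$, $d\in[0,\log K/L]$, $C\ge (K\rho^d)^{\lfloor \log 3/L\rfloor}$, $C>1$. $f\in S(\mathcal{P},\nu,\rho,d,C)$: for one global maximizer $x^\star$, every $x$ in the depth-$h$ cell containing $x^\star$ satisfies $f(x)\ge f(x^\star)-\nu\rho^h$, and for all $h$ the number of depth-$h$ cells $\mathcal{P}_{h,i}$ with $\sup_{\mathcal{P}_{h,i}}f\ge f(x^\star)-3\nu\rho^h$ is at most $C\rho^{-dh}$. Fidelities $Z=[0,1]$, $f_z:\mathcal{X}\to\mathbb{R}$, bias $\zeta$ with strictly increasing $g_z$ and $\sup_x|f(x)-g_z(f_z(x))|\le\zeta(z)$, cost $\lambda$, available fidelities $z_c$ ($\lambda(z_c)\le c$) for $c\ge1$, cost-to-bias $\Phi(c)=\zeta(z_c)$. Assumption (a): $\Phi(c)\le A/c^\alpha$; (b): $\Phi(c)\le Be^{-c^\beta/\sigma}$; (c): $\Phi(c)=0$ for $c\ge a\ge1$. The family $(f_z)$ is in $F(\mathrm{Asm},f,\lambda)$ (some bias function makes the assumption hold). $r_\Lambda=\mathbb{E}[\max f-f(x_\Lambda)]$ for the output $x_\Lambda$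 of Kometo. Kometo: $\tilde\Lambda=\lfloor\frac{(e-1)\Lambda}{2Ke(\log\Lambda+1)^2}\rfloor$, $j_{\max}=\lfloor\log\tilde\Lambda\rfloor$; level $j$ means fidelity $z_{e^j}$; values $f_{h,i,j}=f_{z_{e^j}}(x_{h,i})$ available when flag $T_{h,i,j}=1$; opening $\mathcal{P}_{h,i}$ at level $j$ evaluates all children at all levels $0..j$ (setting their flags). It opens the root at level $j_{\max}$; then for $h=1..\lfloor\tilde\Lambda\rfloor$, $m=1..\lfloor\tilde\Lambda/h\rfloor$, with $j=\lfloor\log\frac{\tilde\Lambda}{hm}\rfloor$, opens at level $j$ the not-yet-opened depth-$h$ cell with flag $T_{h,i,j}=1$ and largest $f_{h,i,j}$; then for each $j\le j_{\max}$ takes the representative $x^c_j$ of a cell maximizing $f_{h,i,j}$, evaluates $f_{z_{\tilde\Lambda}}(x^c_j)$, and outputs the $x^c_j$ with largest such value. Regimes ($W$ = Lambert function, inverse of $w\mapsto we^w$ on $[0,\infty)$): under (a), with $h_1=\frac{1}{(d+1/\alpha)L}W\!\left(\frac{\tilde\Lambda\nu^{1/\alpha}(d+1/\alpha)L}{4CeA^{1/\alpha}}\right)$, high budget means $\nu\rho^{h_1}\le e^\alpha A$ and low budget means $\nu\rho^{h_1}>e^\alpha A$. Under (b), with $a_{b,\nu}=\max(\frac1{2\sigma},\log\frac B\nu)$ and $h_1=\left(\frac{\tilde\Lambda}{4Ce}\right)^{\frac{\beta}{\beta+1}}\left(\frac{1}{2\sigma L}\right)^{\frac1{\beta+1}}$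 if $d=0$, $h_1=\frac{\beta+1}{\beta dL}W\!\left(\frac{\beta}{\beta+1}dL\left(\frac{\tilde\Lambda}{4Ce}\right)^{\frac{\beta}{\beta+1}}\left(\frac{1}{2\sigma L}\right)^{\frac1{\beta+1}}\right)$ if $d>0$, high budget means $h_1\ge a_{b,\nu}/L$ and low budget means $h_1<a_{b,\nu}/L$. Notation: $\tilde{\mathcal{O}}(g(\Lambda))$ denotes a quantity bounded by $g(\Lambda)$ up to multiplicative factors independent of $\Lambda$ and polylogarithmic factors in $\Lambda$; $e^{\tilde{\mathcal{O}}(-g(\Lambda))}$ denotes a quantity bounded by $\exp(-c\,g(\Lambda)/\mathrm{polylog}(\Lambda))$ up to constant factors, for a constant $c>0$ independent of $\Lambda$. *)

theory Defs
  imports Complex_Main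
begin

text \<open>Cells P h i, depth h, index i < K^h; children of (h,i) are (h+1, K*i+l), l<K.
  xr h i is the representative of cell (h,i).\<close>

definition hier_part :: "nat \<Rightarrow> (nat \<Rightarrow> nat \<Rightarrow> 'x set) \<Rightarrow> (nat \<Rightarrow> nat \<Rightarrow> 'x) \<Rightarrow> bool" where
  "hier_part K P xr \<longleftrightarrow>
     2 \<le> K \<and> P 0 0 = UNIV \<and>
     (\<forall>h i. i < K ^ h \<longrightarrow>
        P h i = (\<Union>l<K. P (Suc h) (K * i + l)) \<and>
        (\<forall>l<K. \<forall>l'<K. l \<noteq> l' \<longrightarrow> P (Suc h) (K * i + l) \<inter> P (Suc h) (K * i + l') = {}) \<and>
        xr h i \<in> P h i)"

definition in_S :: "nat \<Rightarrow> (nat \<Rightarrow> nat \<Rightarrow> 'x set) \<Rightarrow> real \<Rightarrow> real \<Rightarrow> real \<Rightarrow> real \<Rightarrow> ('x \<Rightarrow> real) \<Rightarrow> bool" where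
  "in_S K P \<nu> \<rho> d C f \<longleftrightarrow>
     (\<exists>xs. (\<forall>x. f x \<le> f xs) \<and>
        (\<forall>h i. i < K ^ h \<and> xs \<in> P h i \<longrightarrow> (\<forall>x\<in>P h i. f x \<ge> f xs - \<nu> * \<rho> ^ h)) \<and>
        (\<forall>h. real (card {i. i < K ^ h \<and> (SUP x\<in>P h i. f x) \<ge> f xs - 3 * \<nu> * \<rho> ^ h})
               \<le> C * \<rho> powr (- d * real h)))"

definition params_ok :: "nat \<Rightarrow> real \<Rightarrow> real \<Rightarrow> real \<Rightarrow> real \<Rightarrow> bool" where
  "params_ok K \<nu> \<rho> d C \<longleftrightarrow>
     2 \<le> K \<and> \<nu> > 0 \<and> 0 < \<rho> \<and> \<rho> < 1 \<and>
     0 \<le> d \<and> d \<le> ln (real K) / ln (1 / \<rho>) \<and>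
     C \<ge> (real K * \<rho> powr d) powr real_of_int \<lfloor>ln 3 / ln (1 / \<rho>)\<rfloor> \<and> C > 1"

text \<open>fz z is the fidelity-z approximation f_z; zc c is the available fidelity z_c for cost c.\<close>
definition fidelities_ok :: "(real \<Rightarrow> real) \<Rightarrow> (real \<Rightarrow> real) \<Rightarrow> bool" where
  "fidelities_ok lam zc \<longleftrightarrow> (\<forall>c\<ge>1. zc c \<in> {0..1} \<and> lam (zc c) \<le> c)"

text \<open>Membership of (f_z) in F(Asm, f, lambda): some bias function zeta (with some strictly
  increasing g_z) makes the cost-to-bias function Phi(c) = zeta(z_c) satisfy Asm.\<close>
definition in_F :: "((real \<Rightarrow> real) \<Rightarrow> bool) \<Rightarrow> ('x \<Rightarrow> real) \<Rightarrow> (real \<Rightarrow> 'x \<Rightarrow> real) \<Rightarrow> (real \<Rightarrow> real) \<Rightarrow> bool" where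
  "in_F Asm f fz zc \<longleftrightarrow>
     (\<exists>\<zeta> g. (\<forall>z\<in>{0..1}. strict_mono (g z :: real \<Rightarrow> real) \<and> (\<forall>x. \<bar>f x - g z (fz z x)\<bar> \<le> \<zeta> z)) \<and>
            Asm (\<lambda>c. \<zeta> (zc c)))"

definition asm_a :: "real \<Rightarrow> real \<Rightarrow> (real \<Rightarrow> real) \<Rightarrow> bool" where
  "asm_a A \<alpha> \<Phi> \<longleftrightarrow> (\<forall>c\<ge>1. \<Phi> c \<le> A / c powr \<alpha>)"

definition asm_b :: "real \<Rightarrow> real \<Rightarrow> real \<Rightarrow> (real \<Rightarrow> real) \<Rightarrow> bool" where
  "asm_b B \<beta> \<sigma> \<Phi> \<longleftrightarrow> (\<forall>c\<ge>1. \<Phi> c \<le> B * exp (- (c powr \<beta>) / \<sigma>))"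

definition asm_c :: "real \<Rightarrow> (real \<Rightarrow> real) \<Rightarrow> bool" where
  "asm_c a \<Phi> \<longleftrightarrow> (\<forall>c\<ge>a. \<Phi> c = 0)"

definition valid_sel :: "('a set \<Rightarrow> ('a \<Rightarrow> real) \<Rightarrow> 'a) \<Rightarrow> bool" where
  "valid_sel sel \<longleftrightarrow>
     (\<forall>S \<phi>. finite S \<and> S \<noteq> {} \<longrightarrow> sel S \<phi> \<in> S \<and> (\<forall>y\<in>S. \<phi> y \<le> \<phi> (sel S \<phi>)))"

definition Lambda_tilde :: "nat \<Rightarrow> real \<Rightarrow> nat" where
  "Lambda_tilde K \<Lambda> =
     nat \<lfloor>(exp 1 - 1) * \<Lambda> / (2 * real K * exp 1 * (ln \<Lambda> + 1)^2)\<rfloor>"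

definition fval :: "(real \<Rightarrow> 'x \<Rightarrow> real) \<Rightarrow> (real \<Rightarrow> real) \<Rightarrow> (nat \<Rightarrow> nat \<Rightarrow> 'x) \<Rightarrow> nat \<Rightarrow> nat \<Rightarrow> nat \<Rightarrow> real" where
  "fval fz zc xr h i j = fz (zc (exp (real j))) (xr h i)"

type_synonym kstate = "(nat \<times> nat \<times> nat) set \<times> (nat \<times> nat) set"
  \<comment> \<open>flags T (triples (h,i,j) with T_{h,i,j}=1) and the set of opened cells\<close>

definition open_cell :: "nat \<Rightarrow> nat \<Rightarrow> nat \<Rightarrow> nat \<Rightarrow> kstate \<Rightarrow> kstate" where
  "open_cell K h i j st =
     (fst st \<union> {(Suc h, K * i + l, j') | l j'. l < K \<and> j' \<le> j}, insert (h, i) (snd st))"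

definition kometo_step ::
  "nat \<Rightarrow> (real \<Rightarrow> 'x \<Rightarrow> real) \<Rightarrow> (real \<Rightarrow> real) \<Rightarrow> (nat \<Rightarrow> nat \<Rightarrow> 'x) \<Rightarrow>
   ((nat \<times> nat) set \<Rightarrow> ((nat \<times> nat) \<Rightarrow> real) \<Rightarrow> nat \<times> nat) \<Rightarrow> nat \<Rightarrow> kstate \<Rightarrow> nat \<times> nat \<Rightarrow> kstate" where
  "kometo_step K fz zc xr selc Lt st hm =
     (let h = fst hm; m = snd hm;
          j = nat \<lfloor>ln (real Lt / real (h * m))\<rfloor>;
          Cand = {(h', i). h' = h \<and> (h, i) \<notin> snd st \<and> (h, i, j) \<in> fst st}
      in if Cand = {} then st
         else open_cell K h (snd (selc Cand (\<lambda>(h', i). fval fz zc xr h' i j))) j st)"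

definition kometo_schedule :: "nat \<Rightarrow> (nat \<times> nat) list" where
  "kometo_schedule Lt = concat (map (\<lambda>h. map (\<lambda>m. (h, m)) [1..<Lt div h + 1]) [1..<Lt + 1])"

definition kometo ::
  "nat \<Rightarrow> (real \<Rightarrow> 'x \<Rightarrow> real) \<Rightarrow> (real \<Rightarrow> real) \<Rightarrow> (nat \<Rightarrow> nat \<Rightarrow> 'x) \<Rightarrow>
   ((nat \<times> nat) set \<Rightarrow> ((nat \<times> nat) \<Rightarrow> real) \<Rightarrow> nat \<times> nat) \<Rightarrow>
   (nat set \<Rightarrow> (nat \<Rightarrow> real) \<Rightarrow> nat) \<Rightarrow> real \<Rightarrow> 'x" where
  "kometo K fz zc xr selc selj \<Lambda> =
     (let Lt = Lambda_tilde K \<Lambda>;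
          jmax = nat \<lfloor>ln (real Lt)\<rfloor>;
          st0 = open_cell K 0 0 jmax ({}, {});
          st = foldl (kometo_step K fz zc xr selc Lt) st0 (kometo_schedule Lt);
          xc = (\<lambda>j. case selc {(h, i). (h, i, j) \<in> fst st} (\<lambda>(h, i). fval fz zc xr h i j) of
                        (h, i) \<Rightarrow> xr h i);
          jstar = selj {..jmax} (\<lambda>j. fz (zc (real Lt)) (xc j))
      in xc jstar)"

text \<open>Evaluations are noiseless, so the only source of
  randomness is tie-breaking; we take the worst case over all tie-breaking rules, which
  upper-bounds the expectation over any randomised tie-breaking.\<close>
definition kometo_regret ::
  "nat \<Rightarrow> (real \<Rightarrow> 'x \<Rightarrow> real) \<Rightarrow> (real \<Rightarrow> real) \<Rightarrow> (nat \<Rightarrow> nat \<Rightarrow> 'x) \<Rightarrow> ('x \<Rightarrow> real) \<Rightarrow> real \<Rightarrow> real" where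
  "kometo_regret K fz zc xr f \<Lambda> =
     Sup {(SUP x. f x) - f (kometo K fz zc xr selc selj \<Lambda>) | selc selj.
            valid_sel selc \<and> valid_sel selj}"

definition lambertW :: "real \<Rightarrow> real" where
  "lambertW y = (THE w. 0 \<le> w \<and> w * exp w = y)"

definition h1_a :: "nat \<Rightarrow> real \<Rightarrow> real \<Rightarrow> real \<Rightarrow> real \<Rightarrow> real \<Rightarrow> real \<Rightarrow> real \<Rightarrow> real" where
  "h1_a K \<nu> \<rho> d C A \<alpha> \<Lambda> =
     (let L = ln (1 / \<rho>) in
      1 / ((d + 1 / \<alpha>) * L) *
      lambertW (real (Lambda_tilde K \<Lambda>) * \<nu> powr (1 / \<alpha>) * (d + 1 / \<alpha>) * L
                / (4 * C * exp 1 * A powr (1 / \<alpha>))))"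

definition high_budget_a :: "nat \<Rightarrow> real \<Rightarrow> real \<Rightarrow> real \<Rightarrow> real \<Rightarrow> real \<Rightarrow> real \<Rightarrow> real \<Rightarrow> bool" where
  "high_budget_a K \<nu> \<rho> d C A \<alpha> \<Lambda> \<longleftrightarrow> \<nu> * \<rho> powr (h1_a K \<nu> \<rho> d C A \<alpha> \<Lambda>) \<le> exp \<alpha> * A"

definition h1_b :: "nat \<Rightarrow> real \<Rightarrow> real \<Rightarrow> real \<Rightarrow> real \<Rightarrow> real \<Rightarrow> real \<Rightarrow> real" where
  "h1_b K \<rho> d C \<beta> \<sigma> \<Lambda> =
     (let L = ln (1 / \<rho>);
          Y = (real (Lambda_tilde K \<Lambda>) / (4 * C * exp 1)) powr (\<beta> / (\<beta> + 1)) *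
              (1 / (2 * \<sigma> * L)) powr (1 / (\<beta> + 1))
      in if d = 0 then Y
         else (\<beta> + 1) / (\<beta> * d * L) * lambertW (\<beta> / (\<beta> + 1) * d * L * Y))"

definition high_budget_b :: "nat \<Rightarrow> real \<Rightarrow> real \<Rightarrow> real \<Rightarrow> real \<Rightarrow> real \<Rightarrow> real \<Rightarrow> real \<Rightarrow> real \<Rightarrow> bool" where
  "high_budget_b K \<nu> \<rho> d C B \<beta> \<sigma> \<Lambda> \<longleftrightarrow>
     h1_b K \<rho> d C \<beta> \<sigma> \<Lambda> \<ge> max (1 / (2 * \<sigma>)) (ln (B / \<nu>)) / ln (1 / \<rho>)"

definition Otilde_on :: "real set \<Rightarrow> (real \<Rightarrow> real) \<Rightarrow> (real \<Rightarrow> real) \<Rightarrow> bool" where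
  "Otilde_on S r g \<longleftrightarrow>
     (\<exists>c (k::nat). \<forall>\<^sub>F \<Lambda> in at_top. \<Lambda> \<in> S \<longrightarrow> r \<Lambda> \<le> c * (ln \<Lambda>) ^ k * g \<Lambda>)"

definition expOtilde_on :: "real set \<Rightarrow> (real \<Rightarrow> real) \<Rightarrow> (real \<Rightarrow> real) \<Rightarrow> bool" where
  "expOtilde_on S r g \<longleftrightarrow>
     (\<exists>C c (k::nat). c > 0 \<and>
        (\<forall>\<^sub>F \<Lambda> in at_top. \<Lambda> \<in> S \<longrightarrow> r \<Lambda> \<le> C * exp (- c * g \<Lambda> / (ln \<Lambda>) ^ k)))"

definition expOtilde2_on :: "real set \<Rightarrow> (real \<Rightarrow> real) \<Rightarrow> (real \<Rightarrow> real) \<Rightarrow> (real \<Rightarrow> real) \<Rightarrow> bool" where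
  "expOtilde2_on S r g1 g2 \<longleftrightarrow>
     (\<exists>C1 c1 (k1::nat) C2 c2 (k2::nat). c1 > 0 \<and> c2 > 0 \<and>
        (\<forall>\<^sub>F \<Lambda> in at_top. \<Lambda> \<in> S \<longrightarrow>
           r \<Lambda> \<le> C1 * exp (- c1 * g1 \<Lambda> / (ln \<Lambda>) ^ k1) + C2 * exp (- c2 * g2 \<Lambda> / (ln \<Lambda>) ^ k2)))"

end

theory Submission
  imports Defs "HOL-Real_Asymp.Real_Asymp"
begin

text \<open>
  Write \<open>Lt\<close> for the reduced budget \<open>Lambda_tilde K \<Lambda>\<close>. At depth \<open>h\<close>, Kometo opens about
  \<open>Lt / (h e^j)\<close> cells at level \<open>j\<close>. Follow the cells containing the maximiser: if the one at
  depth \<open>h\<close> is flagged at level \<open>j\<close> and the level-\<open>j\<close> openings at depth \<open>h\<close> outnumber the cells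
  whose level-\<open>j\<close> value beats it, it gets opened at a level \<open>\<ge> j\<close>, which flags its child at level
  \<open>j\<close>. If the bias at level \<open>j\<close> is at most \<open>\<nu> \<rho>^H\<close>, every cell beating it is
  \<open>3 \<nu> \<rho>^h\<close>-near-optimal, so there are at most \<open>C \<rho>^(-d h)\<close> of them, and the budget condition
  \<open>4 C H e^j \<rho>^(-d H) \<le> Lt\<close> lets the openings win down to depth \<open>H + 1\<close>. The best cell seen at
  level \<open>j\<close> is then \<open>3 \<nu> \<rho>^H\<close>-optimal up to the bias, and the final comparison at cost \<open>Lt\<close>
  loses \<open>2 \<Phi>(Lt)\<close>. Under each assumption on \<open>\<Phi>\<close> one picks a level \<open>j\<close> with
  \<open>\<Phi>(e^j) \<le> \<nu> \<rho>^H\<close> and the deepest affordable \<open>H\<close>; as \<open>Lt\<close> is \<open>\<Lambda>\<close> up to a polylogarithmic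
  factor, this gives the rates. The low-budget regimes are empty for all large \<open>\<Lambda>\<close>, because
  \<open>h\<^sub>1\<close> grows with \<open>\<Lambda>\<close>.
\<close>

section \<open>Openings per depth and level\<close>

definition slot_level :: "nat \<Rightarrow> nat \<Rightarrow> nat \<Rightarrow> nat" where
  "slot_level Lt h m = nat \<lfloor>ln (real Lt / real (h * m))\<rfloor>"

definition depth_slots :: "nat \<Rightarrow> nat \<Rightarrow> (nat \<times> nat) list" where
  "depth_slots Lt h = map (\<lambda>m. (h, m)) [1..<Lt div h + 1]"

definition level_slots :: "nat \<Rightarrow> nat \<Rightarrow> nat \<Rightarrow> nat" where
  "level_slots Lt h j = length (filter (\<lambda>m. slot_level Lt h m = j) [1..<Lt div h + 1])"

definition wf_state :: "nat \<Rightarrow> kstate \<Rightarrow> bool" where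
  "wf_state K st \<longleftrightarrow> finite (fst st) \<and> (\<forall>h i j. (h, i, j) \<in> fst st \<longrightarrow> i < K ^ h)"

lemma kometo_schedule_eq: "kometo_schedule Lt = concat (map (depth_slots Lt) [1..<Lt + 1])"
  unfolding kometo_schedule_def depth_slots_def[abs_def] ..

lemma child_index_less:
  fixes K i l h :: nat
  assumes "i < K ^ h" "l < K"
  shows "K * i + l < K ^ Suc h"
proof -
  have "K * i + l < K * (i + 1)" using assms(2) by simp
  also have "\<dots> \<le> K * K ^ h" using assms(1) by (intro mult_le_mono2) simp
  finally show ?thesis by simp
qed

lemma fst_open_cell:
  "fst (open_cell K h i j st) = fst st \<union> {(Suc h, K * i + l, j') | l j'. l < K \<and> j' \<le> j}"
  by (simp add: open_cell_def)

lemma snd_open_cell [simp]: "snd (open_cell K h i j st) = insert (h, i) (snd st)"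
  by (simp add: open_cell_def)

lemma open_cell_flags_children:
  "l < K \<Longrightarrow> j' \<le> j \<Longrightarrow> (Suc h, K * i + l, j') \<in> fst (open_cell K h i j st)"
  by (auto simp: fst_open_cell)

lemma wf_state_open_cell:
  assumes "wf_state K st" "i < K ^ h"
  shows "wf_state K (open_cell K h i j st)"
proof -
  have "{(Suc h, K * i + l, j') | l j'. l < K \<and> j' \<le> j} =
      (\<lambda>(l, j'). (Suc h, K * i + l, j')) ` ({..<K} \<times> {..j})"
    by auto
  then have "finite (fst (open_cell K h i j st))"
    using assms(1) by (simp add: wf_state_def fst_open_cell)
  moreover have "i' < K ^ h'" if "(h', i', j') \<in> fst (open_cell K h i j st)" for h' i' j'
    using that assms child_index_less[OF assms(2)] by (auto simp: wf_state_def fst_open_cell)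
  ultimately show ?thesis by (simp add: wf_state_def)
qed

lemma slot_level_eq:
  fixes Lt h m j :: nat
  assumes h: "1 \<le> h"
    and lower: "real Lt / (real h * exp (real j)) / exp 1 < real m"
    and upper: "real m \<le> real Lt / (real h * exp (real j))"
  shows "slot_level Lt h m = j" "m \<in> {1..Lt div h}"
proof -
  have "0 \<le> real Lt / (real h * exp (real j)) / exp 1" by simp
  then have m: "0 < m" using lower by linarith
  have hm: "0 < real h * real m" using h m by simp
  have ej: "exp (real j) \<le> real Lt / (real h * real m)"
    using upper h hm by (simp add: field_simps)
  have ej1: "real Lt / (real h * real m) < exp (real j + 1)"
    using lower h hm by (simp add: field_simps exp_add)
  have q: "0 < real Lt / (real h * real m)" using ej exp_gt_zero[of "real j"] by linarith
  have "real j \<le> ln (real Lt / (real h * real m))" using ej q by (simp add: ln_ge_iff)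
  moreover have "ln (real Lt / (real h * real m)) < real j + 1"
    using ln_less_cancel_iff[OF q, of "exp (real j + 1)"] ej1 by simp
  ultimately show "slot_level Lt h m = j" unfolding slot_level_def by simp linarith
  have "1 \<le> real Lt / (real h * real m)" using ej one_le_exp_iff[of "real j"] by linarith
  then have "m * h \<le> Lt" using hm by (simp add: field_simps flip: of_nat_mult)
  then show "m \<in> {1..Lt div h}" using h m by (simp add: less_eq_div_iff_mult_less_eq)
qed

lemma level_slots_lower_bound:
  fixes Lt h j :: nat
  assumes h: "1 \<le> h"
  defines "x \<equiv> real Lt / (real h * exp (real j))"
  shows "x - 1 - x / exp 1 \<le> real (level_slots Lt h j)"
proof -
  define a where "a = nat \<lfloor>x / exp 1\<rfloor>"
  define b where "b = nat \<lfloor>x\<rfloor>"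
  have x: "0 \<le> x" unfolding x_def by simp
  have a: "x / exp 1 < real a + 1" and b: "real b \<le> x"
    unfolding a_def b_def using x by (simp_all add: of_nat_nat)
  have level_m: "m \<in> set (filter (\<lambda>m. slot_level Lt h m = j) [1..<Lt div h + 1])"
    if "m \<in> {Suc a..b}" for m
  proof -
    have "x / exp 1 < real m" using that a by auto
    moreover have "real m \<le> x" using that b by auto
    ultimately have "slot_level Lt h m = j" "m \<in> {1..Lt div h}"
      using slot_level_eq[OF h, of Lt j m] unfolding x_def by auto
    then show ?thesis unfolding set_filter set_upt by auto
  qed
  then have "card {Suc a..b} \<le> card (set (filter (\<lambda>m. slot_level Lt h m = j) [1..<Lt div h + 1]))"
    by (intro card_mono subsetI level_m) simp_all
  also have "\<dots> \<le> level_slots Lt h j" unfolding level_slots_def by (rule card_length)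
  finally have "b - a \<le> level_slots Lt h j" by simp
  moreover have "x - 1 - x / exp 1 \<le> real b - real a"
    unfolding a_def b_def using x by (simp; linarith)
  ultimately show ?thesis by linarith
qed

lemma level_slots_gt:
  fixes Lt h j :: nat and y :: real
  assumes h: "1 \<le> h" and y: "1 < y" and budget: "4 * y * (real h * exp (real j)) \<le> real Lt"
  shows "y < real (level_slots Lt h j)"
proof -
  define x where "x = real Lt / (real h * exp (real j))"
  have "4 * y \<le> x" unfolding x_def using budget h by (simp add: field_simps)
  moreover have "x / exp 1 \<le> x / 2"
    using calculation y exp_ge_add_one_self[of 1] by (intro divide_left_mono) auto
  ultimately have "y < x - 1 - x / exp 1" using y by linarith
  also have "\<dots> \<le> real (level_slots Lt h j)" unfolding x_def by (rule level_slots_lower_bound[OF h])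
  finally show ?thesis .
qed

lemma slot_level_antimono:
  assumes "1 \<le> h" "1 \<le> a" "a \<le> b"
  shows "slot_level Lt h b \<le> slot_level Lt h a"
proof (cases "Lt = 0")
  case False
  have "real Lt / real (h * b) \<le> real Lt / real (h * a)"
    using assms by (intro divide_left_mono) auto
  moreover have "0 < real Lt / real (h * b)" using False assms by simp
  ultimately show ?thesis unfolding slot_level_def by (intro nat_mono floor_mono) simp
qed (simp add: slot_level_def)

lemma sorted_slot_levels: "1 \<le> h \<Longrightarrow> sorted_wrt (\<lambda>a b. slot_level Lt h b \<le> slot_level Lt h a) [1..<N]"
  by (rule sorted_wrt_mono_rel[OF _ sorted_wrt_upt]) (auto intro: slot_level_antimono)

section \<open>Runs of Kometo\<close>

locale kometo_run =
  fixes K :: nat and fz :: "real \<Rightarrow> 'x \<Rightarrow> real" and zc :: "real \<Rightarrow> real"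
    and xr :: "nat \<Rightarrow> nat \<Rightarrow> 'x" and selc :: "(nat \<times> nat) set \<Rightarrow> (nat \<times> nat \<Rightarrow> real) \<Rightarrow> nat \<times> nat"
    and Lt :: nat
  assumes selc: "valid_sel selc"
begin

abbreviation step :: "kstate \<Rightarrow> nat \<times> nat \<Rightarrow> kstate" where
  "step \<equiv> kometo_step K fz zc xr selc Lt"

abbreviation value_at :: "nat \<Rightarrow> nat \<Rightarrow> nat \<Rightarrow> real" where
  "value_at \<equiv> fval fz zc xr"

lemma step_cases:
  assumes "wf_state K st"
  obtains (idle) "step st (h, m) = st"
      "\<And>i. (h, i, slot_level Lt h m) \<in> fst st \<Longrightarrow> (h, i) \<in> snd st"
  | (opens) i where "(h, i, slot_level Lt h m) \<in> fst st" "(h, i) \<notin> snd st"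
      "\<And>i'. (h, i', slot_level Lt h m) \<in> fst st \<Longrightarrow> (h, i') \<notin> snd st \<Longrightarrow>
             value_at h i' (slot_level Lt h m) \<le> value_at h i (slot_level Lt h m)"
      "step st (h, m) = open_cell K h i (slot_level Lt h m) st"
proof -
  define j where "j = slot_level Lt h m"
  define Cand where "Cand = {(h', i). h' = h \<and> (h, i) \<notin> snd st \<and> (h, i, j) \<in> fst st}"
  define v where "v = (\<lambda>(h', i). value_at h' i j)"
  have step_eq: "step st (h, m) = (if Cand = {} then st else open_cell K h (snd (selc Cand v)) j st)"
    by (simp only: kometo_step_def Let_def Cand_def j_def slot_level_def v_def fst_conv snd_conv)
  show thesis
  proof (cases "Cand = {}")
    case True
    then have "step st (h, m) = st" using step_eq by simp
    moreover have "(h, i) \<in> snd st" if "(h, i, slot_level Lt h m) \<in> fst st" for i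
      using True that by (auto simp: Cand_def j_def)
    ultimately show thesis by (rule idle)
  next
    case False
    have "Cand \<subseteq> {h} \<times> {..<K ^ h}" using assms by (auto simp: Cand_def wf_state_def)
    then have "finite Cand" by (rule finite_subset) simp
    with False selc have sel: "selc Cand v \<in> Cand" "\<forall>y\<in>Cand. v y \<le> v (selc Cand v)"
      unfolding valid_sel_def by blast+
    then obtain i where i: "selc Cand v = (h, i)" "(h, i) \<notin> snd st" "(h, i, j) \<in> fst st"
      unfolding Cand_def by blast
    show thesis
    proof (rule opens)
      show "(h, i, slot_level Lt h m) \<in> fst st" "(h, i) \<notin> snd st" using i by (simp_all add: j_def)
      show "value_at h i' (slot_level Lt h m) \<le> value_at h i (slot_level Lt h m)"
        if "(h, i', slot_level Lt h m) \<in> fst st" "(h, i') \<notin> snd st" for i'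
        using sel(2) that i(1) by (force simp: Cand_def v_def j_def)
      show "step st (h, m) = open_cell K h i (slot_level Lt h m) st"
        using step_eq False i(1) by (simp add: j_def)
    qed
  qed
qed

lemma step_wf:
  assumes "wf_state K st"
  shows "wf_state K (step st (h, m))"
  using assms
proof (cases rule: step_cases[of st h m])
  case (opens i)
  then have "i < K ^ h" using assms by (auto simp: wf_state_def)
  then show ?thesis using opens(4) wf_state_open_cell[OF assms] by simp
qed (use assms in simp)

lemma step_subsets:
  assumes "wf_state K st"
  shows "fst st \<subseteq> fst (step st (h, m))" "snd st \<subseteq> snd (step st (h, m))"
    and "snd (step st (h, m)) \<subseteq> snd st \<union> {h} \<times> UNIV"
  using assms by (cases rule: step_cases[of st h m]; force simp: fst_open_cell)+

lemma foldl_step_wf: "wf_state K st \<Longrightarrow> wf_state K (foldl step st ss)"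
proof (induction ss arbitrary: st)
  case (Cons s ss)
  then show ?case by (cases s) (simp add: step_wf)
qed simp

lemma foldl_step_mono: "wf_state K st \<Longrightarrow> fst st \<subseteq> fst (foldl step st ss)"
proof (induction ss arbitrary: st)
  case (Cons s ss)
  obtain h m where "s = (h, m)" by (cases s)
  then show ?case
    using step_subsets(1)[OF Cons.prems, of h m] Cons.IH[OF step_wf[OF Cons.prems, of h m]] by auto
qed simp

lemma foldl_step_opened:
  "wf_state K st \<Longrightarrow> snd (foldl step st ss) \<subseteq> snd st \<union> (fst ` set ss) \<times> UNIV"
proof (induction ss arbitrary: st)
  case (Cons s ss)
  obtain h m where s: "s = (h, m)" by (cases s)
  have "snd (foldl step (step st (h, m)) ss) \<subseteq> snd (step st (h, m)) \<union> (fst ` set ss) \<times> UNIV"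
    using Cons step_wf by blast
  then show ?case using step_subsets(3)[OF Cons.prems, of h m] s by auto
qed simp

definition run_depths :: "kstate \<Rightarrow> nat \<Rightarrow> kstate" where
  "run_depths st H = foldl step st (concat (map (depth_slots Lt) [1..<H + 1]))"

lemma run_depths_Suc: "run_depths st (Suc H) = foldl step (run_depths st H) (depth_slots Lt (Suc H))"
  by (simp add: run_depths_def)

lemma run_depths_wf: "wf_state K st \<Longrightarrow> wf_state K (run_depths st H)"
  unfolding run_depths_def by (rule foldl_step_wf)

lemma run_depths_mono:
  assumes "wf_state K st" "H \<le> H'"
  shows "fst (run_depths st H) \<subseteq> fst (run_depths st H')"
proof -
  have "[1..<H' + 1] = [1..<H + 1] @ [H + 1..<H' + 1]"
    using upt_add_eq_append[of 1 "H + 1" "H' - H"] assms(2) by simp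
  then have "run_depths st H' = foldl step (run_depths st H) (concat (map (depth_slots Lt) [H + 1..<H' + 1]))"
    by (simp add: run_depths_def)
  then show ?thesis using foldl_step_mono[OF run_depths_wf[OF assms(1)]] by simp
qed

lemma run_depths_opened:
  assumes "wf_state K st"
  shows "snd (run_depths st H) \<subseteq> snd st \<union> {1..H} \<times> UNIV"
proof -
  have "fst ` set (concat (map (depth_slots Lt) [1..<H + 1])) \<subseteq> {1..H}"
    by (auto simp: depth_slots_def)
  then show ?thesis using foldl_step_opened[OF assms] unfolding run_depths_def by blast
qed

lemma foldl_schedule: "foldl step st (kometo_schedule Lt) = run_depths st Lt"
  by (simp add: kometo_schedule_eq run_depths_def)

definition better_opened :: "nat \<Rightarrow> nat \<Rightarrow> nat \<Rightarrow> kstate \<Rightarrow> nat set" where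
  "better_opened h i j st = {i'. i' < K ^ h \<and> (h, i') \<in> snd st \<and> value_at h i j \<le> value_at h i' j}"

lemma finite_better_opened: "finite (better_opened h i j st)"
  by (rule finite_subset[of _ "{..<K ^ h}"]) (auto simp: better_opened_def)

lemma card_better_opened_mono:
  "snd st \<subseteq> snd st' \<Longrightarrow> card (better_opened h i j st) \<le> card (better_opened h i j st')"
  by (rule card_mono[OF finite_better_opened]) (auto simp: better_opened_def)

lemma card_better_opened_open_cell:
  assumes "i0 < K ^ h" "(h, i0) \<notin> snd st" "value_at h i j \<le> value_at h i0 j"
  shows "card (better_opened h i j (open_cell K h i0 l st)) = Suc (card (better_opened h i j st))"
proof -
  have "better_opened h i j (open_cell K h i0 l st) = insert i0 (better_opened h i j st)"
    using assms by (auto simp: better_opened_def)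
  moreover have "i0 \<notin> better_opened h i j st" using assms(2) by (simp add: better_opened_def)
  ultimately show ?thesis using finite_better_opened by simp
qed

text \<open>Invariant while the slots of depth \<open>h\<close> are processed, for a path cell \<open>i\<close> flagged at level
  \<open>j\<close> with child \<open>i'\<close>: either the child is flagged at level \<open>j\<close>, or the \<open>c\<close> level-\<open>j\<close> slots
  processed so far have opened distinct cells at least as good as \<open>i\<close>, and once \<open>i\<close> is opened no
  level-\<open>j\<close> slot remains among the pending slots \<open>ms\<close>.\<close>
definition path_progress :: "nat \<Rightarrow> nat \<Rightarrow> nat \<Rightarrow> nat \<Rightarrow> kstate \<Rightarrow> nat \<Rightarrow> nat list \<Rightarrow> bool" where
  "path_progress h i i' j st c ms \<longleftrightarrow> (Suc h, i', j) \<in> fst st \<or>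
     (c \<le> card (better_opened h i j st) \<and> ((h, i) \<in> snd st \<longrightarrow> (\<forall>m\<in>set ms. slot_level Lt h m \<noteq> j)))"

lemma step_opened_cell:
  assumes "wf_state K st" "(h, i) \<in> snd (step st (h, m))" "(h, i) \<notin> snd st"
  shows "step st (h, m) = open_cell K h i (slot_level Lt h m) st"
  using assms(1)
proof (cases rule: step_cases[of st h m])
  case (opens i0)
  then show ?thesis using assms(2,3) by auto
qed (use assms in simp)

lemma path_progress_step_other_level:
  assumes wf: "wf_state K st" and child: "i' = K * i + l" "l < K"
    and later: "\<forall>m'\<in>set ms. slot_level Lt h m' \<le> slot_level Lt h m"
    and level: "slot_level Lt h m \<noteq> j"
    and inv: "path_progress h i i' j st c (m # ms)"
  shows "path_progress h i i' j (step st (h, m)) c ms"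
proof (cases "(Suc h, i', j) \<in> fst (step st (h, m))")
  case False
  then have "(Suc h, i', j) \<notin> fst st" using step_subsets(1)[OF wf] by blast
  with inv have c: "c \<le> card (better_opened h i j st)"
    and no_slot: "(h, i) \<in> snd st \<Longrightarrow> \<forall>m'\<in>set (m # ms). slot_level Lt h m' \<noteq> j"
    unfolding path_progress_def by blast+
  have "\<forall>m'\<in>set ms. slot_level Lt h m' \<noteq> j" if "(h, i) \<in> snd (step st (h, m))"
  proof (cases "(h, i) \<in> snd st")
    case False
    then have "step st (h, m) = open_cell K h i (slot_level Lt h m) st"
      using step_opened_cell[OF wf that] by blast
    then have "slot_level Lt h m < j"
      using \<open>(Suc h, i', j) \<notin> fst (step st (h, m))\<close> child open_cell_flags_children by (metis not_le)
    then show ?thesis using later by fastforce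
  qed (use no_slot in simp)
  moreover have "c \<le> card (better_opened h i j (step st (h, m)))"
    using c card_better_opened_mono[OF step_subsets(2)[OF wf]] by (rule order.trans)
  ultimately show ?thesis unfolding path_progress_def by blast
qed (simp add: path_progress_def)

lemma path_progress_step_level:
  assumes wf: "wf_state K st" and flag: "(h, i, j) \<in> fst st" and child: "i' = K * i + l" "l < K"
    and level: "slot_level Lt h m = j"
    and inv: "path_progress h i i' j st c (m # ms)"
  shows "path_progress h i i' j (step st (h, m)) (Suc c) ms"
proof (cases "(Suc h, i', j) \<in> fst st")
  case True
  then show ?thesis using step_subsets(1)[OF wf] unfolding path_progress_def by blast
next
  case False
  with inv level have c: "c \<le> card (better_opened h i j st)" and unopened: "(h, i) \<notin> snd st"
    unfolding path_progress_def by auto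
  from wf show ?thesis
  proof (cases rule: step_cases[of st h m])
    case idle
    then show ?thesis using flag level unopened by simp
  next
    case (opens i0)
    show ?thesis
    proof (cases "i0 = i")
      case True
      then show ?thesis
        using opens(4) child level by (simp add: path_progress_def open_cell_flags_children)
    next
      case False
      have "i0 < K ^ h" using opens(1) wf by (auto simp: wf_state_def)
      moreover have "value_at h i j \<le> value_at h i0 j" using opens(3) flag level unopened by blast
      ultimately have "Suc c \<le> card (better_opened h i j (step st (h, m)))"
        using card_better_opened_open_cell[OF _ opens(2)] c opens(4) level by simp
      moreover have "(h, i) \<notin> snd (step st (h, m))" using opens(4) False unopened by simp
      ultimately show ?thesis unfolding path_progress_def by blast
    qed
  qed
qed

lemma path_progress_foldl:
  assumes "sorted_wrt (\<lambda>a b. slot_level Lt h b \<le> slot_level Lt h a) ms"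
    and "wf_state K st" "(h, i, j) \<in> fst st" "i' = K * i + l" "l < K"
    and "path_progress h i i' j st c ms"
  shows "path_progress h i i' j (foldl step st (map (Pair h) ms))
           (c + length (filter (\<lambda>m. slot_level Lt h m = j) ms)) []"
  using assms
proof (induction ms arbitrary: st c)
  case Nil
  then show ?case by (auto simp: path_progress_def)
next
  case (Cons m ms)
  let ?c' = "c + (if slot_level Lt h m = j then 1 else 0)"
  have "path_progress h i i' j (step st (h, m)) ?c' ms"
    using Cons.prems path_progress_step_level path_progress_step_other_level
    by (cases "slot_level Lt h m = j") auto
  moreover have "(h, i, j) \<in> fst (step st (h, m))"
    using step_subsets(1)[OF Cons.prems(2)] Cons.prems(3) by blast
  ultimately have "path_progress h i i' j (foldl step (step st (h, m)) (map (Pair h) ms))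
      (?c' + length (filter (\<lambda>m. slot_level Lt h m = j) ms)) []"
    using Cons.IH Cons.prems(1,4,5) step_wf[OF Cons.prems(2)] by simp
  then show ?case by (cases "slot_level Lt h m = j") simp_all
qed

lemma child_flagged_after_depth:
  assumes wf: "wf_state K st0" and root: "snd st0 \<subseteq> {0} \<times> UNIV"
    and flag: "(Suc h, i, j) \<in> fst (run_depths st0 h)" and child: "i' = K * i + l" "l < K"
    and few: "\<And>st. card (better_opened (Suc h) i j st) < level_slots Lt (Suc h) j"
  shows "(Suc (Suc h), i', j) \<in> fst (run_depths st0 (Suc h))"
proof -
  define S where "S = run_depths st0 h"
  have wf_S: "wf_state K S" unfolding S_def by (rule run_depths_wf[OF wf])
  have "(Suc h, i) \<notin> snd S" using run_depths_opened[OF wf, of h] root unfolding S_def by auto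
  then have init: "path_progress (Suc h) i i' j S 0 [1..<Lt div Suc h + 1]"
    by (simp add: path_progress_def)
  have "path_progress (Suc h) i i' j (foldl step S (map (Pair (Suc h)) [1..<Lt div Suc h + 1]))
      (0 + level_slots Lt (Suc h) j) []"
    unfolding level_slots_def
    using path_progress_foldl[OF sorted_slot_levels[of "Suc h"] wf_S flag[folded S_def] child init]
    by simp
  moreover have "foldl step S (map (Pair (Suc h)) [1..<Lt div Suc h + 1]) = run_depths st0 (Suc h)"
    unfolding run_depths_Suc S_def depth_slots_def ..
  ultimately show ?thesis using few unfolding path_progress_def by (metis add_0 leD)
qed

lemma path_flagged:
  assumes wf: "wf_state K st0" and root: "snd st0 \<subseteq> {0} \<times> UNIV"
    and path: "\<And>h. \<exists>l<K. ot (Suc h) = K * ot h + l"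
    and flag0: "(Suc 0, ot (Suc 0), j) \<in> fst st0"
    and few: "\<And>h st. 1 \<le> h \<Longrightarrow> h \<le> H \<Longrightarrow> card (better_opened h (ot h) j st) < level_slots Lt h j"
  shows "(Suc H, ot (Suc H), j) \<in> fst (run_depths st0 H)"
proof -
  have "h \<le> H \<Longrightarrow> (Suc h, ot (Suc h), j) \<in> fst (run_depths st0 h)" for h
  proof (induction h)
    case 0
    then show ?case using flag0 by (simp add: run_depths_def)
  next
    case (Suc h)
    obtain l where "l < K" "ot (Suc (Suc h)) = K * ot (Suc h) + l" using path by blast
    then show ?case
      using child_flagged_after_depth[OF wf root] Suc few[of "Suc h"] by simp
  qed
  then show ?thesis by simp
qed

end

section \<open>Regret of a single run\<close>

lemma hier_part_rep_mem: "hier_part K P xr \<Longrightarrow> i < K ^ h \<Longrightarrow> xr h i \<in> P h i"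
  unfolding hier_part_def by blast

lemma hier_part_path:
  assumes part: "hier_part K P xr"
  obtains ot where "ot 0 = 0" "\<And>h. \<exists>l<K. ot (Suc h) = K * ot h + l"
    "\<And>h. ot h < K ^ h" "\<And>h. xs \<in> P h (ot h)"
proof -
  define pick where "pick = (\<lambda>h i. SOME l. l < K \<and> xs \<in> P (Suc h) (K * i + l))"
  define ot where "ot = rec_nat 0 (\<lambda>h i. K * i + pick h i)"
  have ot_Suc: "ot (Suc h) = K * ot h + pick h (ot h)" for h by (simp add: ot_def)
  have pick: "pick h i < K \<and> xs \<in> P (Suc h) (K * i + pick h i)"
    if "i < K ^ h" "xs \<in> P h i" for h i
  proof -
    have "P h i = (\<Union>l<K. P (Suc h) (K * i + l))" using part that(1) by (simp add: hier_part_def)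
    then have "\<exists>l. l < K \<and> xs \<in> P (Suc h) (K * i + l)" using that(2) by auto
    then show ?thesis unfolding pick_def by (rule someI_ex)
  qed
  have inv: "ot h < K ^ h \<and> xs \<in> P h (ot h)" for h
  proof (induction h)
    case 0
    then show ?case using part by (simp add: ot_def hier_part_def)
  next
    case (Suc h)
    then show ?case using pick[of "ot h" h] child_index_less[of "ot h" K h] by (simp add: ot_Suc)
  qed
  show thesis
  proof
    show "ot 0 = 0" by (simp add: ot_def)
    show "\<exists>l<K. ot (Suc h) = K * ot h + l" for h using pick[of "ot h" h] inv[of h] ot_Suc by blast
  qed (use inv in blast)+
qed

definition bias_function :: "('x \<Rightarrow> real) \<Rightarrow> (real \<Rightarrow> 'x \<Rightarrow> real) \<Rightarrow> (real \<Rightarrow> real) \<Rightarrow> bool" where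
  "bias_function f fz \<zeta> \<longleftrightarrow>
     (\<exists>g. \<forall>z\<in>{0..1}. strict_mono (g z :: real \<Rightarrow> real) \<and> (\<forall>x. \<bar>f x - g z (fz z x)\<bar> \<le> \<zeta> z))"

lemma in_F_iff: "in_F Asm f fz zc \<longleftrightarrow> (\<exists>\<zeta>. bias_function f fz \<zeta> \<and> Asm (\<lambda>c. \<zeta> (zc c)))"
  unfolding in_F_def bias_function_def by blast

lemma bias_function_order:
  assumes "bias_function f fz \<zeta>" "z \<in> {0..1}" "fz z a \<le> fz z b"
  shows "f a \<le> f b + 2 * \<zeta> z"
proof -
  obtain g where "strict_mono (g z)" and g: "\<And>x. \<bar>f x - g z (fz z x)\<bar> \<le> \<zeta> z"
    using assms(1,2) unfolding bias_function_def by blast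
  then have "g z (fz z a) \<le> g z (fz z b)" using assms(3) by (simp add: strict_mono_less_eq)
  then show ?thesis using g[of a] g[of b] by linarith
qed

lemma fidelities_ok_in_unit: "fidelities_ok lam zc \<Longrightarrow> 1 \<le> c \<Longrightarrow> zc c \<in> {0..1}"
  by (simp add: fidelities_ok_def)

lemma wf_state_root: "wf_state K (open_cell K 0 0 j ({}, {}))"
  by (rule wf_state_open_cell) (simp_all add: wf_state_def)

lemma powr_minus_mult_ge_one:
  fixes \<rho> d t :: real
  assumes "0 < \<rho>" "\<rho> < 1" "0 \<le> d" "0 \<le> t"
  shows "1 \<le> \<rho> powr (- d * t)"
  using powr_mono'[of "- d * t" 0 \<rho>] assms by simp

lemma powr_minus_mult_mono:
  fixes \<rho> d t t' :: real
  assumes "0 < \<rho>" "\<rho> < 1" "0 \<le> d" "t \<le> t'"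
  shows "\<rho> powr (- d * t) \<le> \<rho> powr (- d * t')"
  using powr_mono'[of "- d * t'" "- d * t" \<rho>] assms by (simp add: mult_left_mono)

context kometo_run
begin

lemma better_opened_near_optimal:
  assumes part: "hier_part K P xr" and bias: "bias_function f fz \<zeta>" and z: "zc (exp (real j)) \<in> {0..1}"
    and fmax: "\<forall>x. f x \<le> f xs" and near: "\<forall>x\<in>P h i. f xs - \<nu> * \<rho> ^ h \<le> f x" and i: "i < K ^ h"
    and small_bias: "\<zeta> (zc (exp (real j))) \<le> \<nu> * \<rho> ^ h"
  shows "better_opened h i j st \<subseteq> {i'. i' < K ^ h \<and> f xs - 3 * \<nu> * \<rho> ^ h \<le> (SUP x\<in>P h i'. f x)}"
proof
  fix i' assume "i' \<in> better_opened h i j st"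
  then have i': "i' < K ^ h" and "value_at h i j \<le> value_at h i' j"
    by (auto simp: better_opened_def)
  then have "f (xr h i) \<le> f (xr h i') + 2 * \<zeta> (zc (exp (real j)))"
    using bias_function_order[OF bias z] by (simp add: fval_def)
  moreover have "f xs - \<nu> * \<rho> ^ h \<le> f (xr h i)"
    using near hier_part_rep_mem[OF part i] by blast
  moreover have "f (xr h i') \<le> (SUP x\<in>P h i'. f x)"
    using hier_part_rep_mem[OF part i'] fmax by (intro cSUP_upper bdd_aboveI[of _ "f xs"]) auto
  ultimately show "i' \<in> {i'. i' < K ^ h \<and> f xs - 3 * \<nu> * \<rho> ^ h \<le> (SUP x\<in>P h i'. f x)}"
    using i' small_bias by simp
qed

lemma card_better_opened_less:
  assumes part: "hier_part K P xr" and par: "params_ok K \<nu> \<rho> d C" and fid: "fidelities_ok lam zc"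
    and bias: "bias_function f fz \<zeta>" and fmax: "\<forall>x. f x \<le> f xs"
    and near: "\<forall>x\<in>P h i. f xs - \<nu> * \<rho> ^ h \<le> f x" and i: "i < K ^ h"
    and count: "real (card {i. i < K ^ h \<and> (SUP x\<in>P h i. f x) \<ge> f xs - 3 * \<nu> * \<rho> ^ h})
                  \<le> C * \<rho> powr (- d * real h)"
    and h: "1 \<le> h" "h \<le> H" and small_bias: "\<zeta> (zc (exp (real j))) \<le> \<nu> * \<rho> ^ H"
    and budget: "4 * C * real H * exp (real j) * \<rho> powr (- d * real H) \<le> real Lt"
  shows "card (better_opened h i j st) < level_slots Lt h j"
proof -
  define N where "N = {i. i < K ^ h \<and> (SUP x\<in>P h i. f x) \<ge> f xs - 3 * \<nu> * \<rho> ^ h}"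
  have \<nu>: "0 < \<nu>" and \<rho>: "0 < \<rho>" "\<rho> < 1" and C: "1 < C" and d: "0 \<le> d"
    using par by (auto simp: params_ok_def)
  have "\<nu> * \<rho> ^ H \<le> \<nu> * \<rho> ^ h" using h \<nu> \<rho> by (simp add: power_decreasing)
  then have "better_opened h i j st \<subseteq> N"
    unfolding N_def using near i small_bias fidelities_ok_in_unit[OF fid, of "exp (real j)"]
    by (intro better_opened_near_optimal[OF part bias _ fmax]) auto
  moreover have "finite N" unfolding N_def by (rule finite_subset[of _ "{..<K ^ h}"]) auto
  ultimately have "card (better_opened h i j st) \<le> card N" by (intro card_mono)
  then have "real (card (better_opened h i j st)) \<le> C * \<rho> powr (- d * real h)"
    using count unfolding N_def by linarith
  also have "\<dots> < real (level_slots Lt h j)"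
  proof (rule level_slots_gt[OF h(1)])
    show "1 < C * \<rho> powr (- d * real h)"
      using mult_left_mono[OF powr_minus_mult_ge_one[OF \<rho> d, of "real h"], of C] C by linarith
    have "\<rho> powr (- d * real h) * real h \<le> \<rho> powr (- d * real H) * real H"
      using h powr_minus_mult_mono[OF \<rho> d, of "real h" "real H"] powr_minus_mult_ge_one[OF \<rho> d]
      by (intro mult_mono) auto
    then have "4 * C * exp (real j) * (\<rho> powr (- d * real h) * real h)
        \<le> 4 * C * exp (real j) * (\<rho> powr (- d * real H) * real H)"
      using C by (intro mult_left_mono) auto
    then show "4 * (C * \<rho> powr (- d * real h)) * (real h * exp (real j)) \<le> real Lt"
      using budget by (simp add: ac_simps)
  qed
  finally show ?thesis by simp
qed

lemma optimal_cell_flagged: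
  assumes part: "hier_part K P xr" and par: "params_ok K \<nu> \<rho> d C" and fid: "fidelities_ok lam zc"
    and bias: "bias_function f fz \<zeta>"
    and fmax: "\<forall>x. f x \<le> f xs"
    and fpath: "\<forall>h i. i < K ^ h \<and> xs \<in> P h i \<longrightarrow> (\<forall>x\<in>P h i. f x \<ge> f xs - \<nu> * \<rho> ^ h)"
    and fcnt: "\<forall>h. real (card {i. i < K ^ h \<and> (SUP x\<in>P h i. f x) \<ge> f xs - 3 * \<nu> * \<rho> ^ h})
                 \<le> C * \<rho> powr (- d * real h)"
    and j: "j \<le> jmax" and small_bias: "\<zeta> (zc (exp (real j))) \<le> \<nu> * \<rho> ^ H"
    and budget: "4 * C * real H * exp (real j) * \<rho> powr (- d * real H) \<le> real Lt"
  obtains i where "i < K ^ Suc H" "xs \<in> P (Suc H) i"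
    "(Suc H, i, j) \<in> fst (run_depths (open_cell K 0 0 jmax ({}, {})) Lt)"
proof -
  have \<rho>: "0 < \<rho>" "\<rho> < 1" and C: "1 < C" and d: "0 \<le> d" using par by (auto simp: params_ok_def)
  obtain ot where ot0: "ot 0 = 0" and ot_Suc: "\<And>h. \<exists>l<K. ot (Suc h) = K * ot h + l"
    and ot_idx: "\<And>h. ot h < K ^ h" and ot_opt: "\<And>h. xs \<in> P h (ot h)"
    using hier_part_path[OF part] by blast
  define st0 where "st0 = open_cell K 0 0 jmax ({}, {})"
  obtain l where "l < K" "ot (Suc 0) = K * ot 0 + l" using ot_Suc by blast
  then have flag0: "(Suc 0, ot (Suc 0), j) \<in> fst st0"
    using open_cell_flags_children[OF \<open>l < K\<close> j, where h=0 and i=0 and st="({}, {})"] ot0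
    unfolding st0_def by simp
  have "card (better_opened h (ot h) j st) < level_slots Lt h j" if "1 \<le> h" "h \<le> H" for h st
  proof (rule card_better_opened_less[OF part par fid bias fmax _ ot_idx _ that small_bias budget])
    show "\<forall>x\<in>P h (ot h). f xs - \<nu> * \<rho> ^ h \<le> f x" using fpath ot_idx ot_opt by auto
  qed (use fcnt in blast)
  then have "(Suc H, ot (Suc H), j) \<in> fst (run_depths st0 H)"
    using path_flagged[OF wf_state_root[of K jmax, folded st0_def] _ ot_Suc flag0] by (simp add: st0_def)
  moreover have "H \<le> Lt"
  proof -
    have "1 * 1 * 1 \<le> 4 * C * exp (real j) * \<rho> powr (- d * real H)"
      using C powr_minus_mult_ge_one[OF \<rho> d, of "real H"] by (intro mult_mono) auto
    then have "real H * 1 \<le> real H * (4 * C * exp (real j) * \<rho> powr (- d * real H))"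
      by (intro mult_left_mono) auto
    then show ?thesis using budget by (simp add: ac_simps)
  qed
  ultimately have "(Suc H, ot (Suc H), j) \<in> fst (run_depths st0 Lt)"
    using run_depths_mono[OF wf_state_root[of K jmax, folded st0_def]] by blast
  then show thesis using that ot_idx ot_opt unfolding st0_def by blast
qed

end

lemma kometo_recommendation:
  fixes K :: nat and \<Lambda> :: real
  defines "jmax \<equiv> nat \<lfloor>ln (real (Lambda_tilde K \<Lambda>))\<rfloor>"
  assumes selc: "valid_sel selc" and selj: "valid_sel selj"
    and flag: "(h, i, j) \<in> fst (kometo_run.run_depths K fz zc xr selc (Lambda_tilde K \<Lambda>)
                                  (open_cell K 0 0 jmax ({}, {})) (Lambda_tilde K \<Lambda>))"
    and j: "j \<le> jmax"
  obtains h' i' where "fval fz zc xr h i j \<le> fval fz zc xr h' i' j"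
    "fz (zc (real (Lambda_tilde K \<Lambda>))) (xr h' i')
       \<le> fz (zc (real (Lambda_tilde K \<Lambda>))) (kometo K fz zc xr selc selj \<Lambda>)"
proof -
  define Lt where "Lt = Lambda_tilde K \<Lambda>"
  interpret kometo_run K fz zc xr selc Lt by unfold_locales (rule selc)
  define st where "st = foldl step (open_cell K 0 0 jmax ({}, {})) (kometo_schedule Lt)"
  define v where "v = (\<lambda>j (h, i). fval fz zc xr h i j)"
  define xc where "xc = (\<lambda>j. case selc {(h, i). (h, i, j) \<in> fst st} (v j) of (h, i) \<Rightarrow> xr h i)"
  define jstar where "jstar = selj {..jmax} (\<lambda>j. fz (zc (real Lt)) (xc j))"
  have out: "kometo K fz zc xr selc selj \<Lambda> = xc jstar"
    unfolding kometo_def Let_def jstar_def xc_def v_def st_def jmax_def Lt_def by simp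
  have st: "st = kometo_run.run_depths K fz zc xr selc Lt (open_cell K 0 0 jmax ({}, {})) Lt"
    unfolding st_def by (rule foldl_schedule)
  define S where "S = {(h, i). (h, i, j) \<in> fst st}"
  have "S \<subseteq> (\<lambda>(h, i, j). (h, i)) ` fst st" unfolding S_def by force
  moreover have "finite (fst st)" using run_depths_wf[OF wf_state_root] unfolding st by (simp add: wf_state_def)
  ultimately have "finite S" by (meson finite_imageI finite_subset)
  moreover have "(h, i) \<in> S" using flag unfolding S_def st Lt_def by simp
  ultimately have "selc S (v j) \<in> S" "v j (h, i) \<le> v j (selc S (v j))"
    using selc unfolding valid_sel_def by blast+
  moreover obtain h' i' where hi': "selc S (v j) = (h', i')" by fastforce
  ultimately have "fval fz zc xr h i j \<le> fval fz zc xr h' i' j" and xc: "xc j = xr h' i'"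
    unfolding v_def xc_def S_def by simp_all
  moreover have "fz (zc (real Lt)) (xc j) \<le> fz (zc (real Lt)) (xc jstar)"
    using selj j unfolding valid_sel_def jstar_def by (metis atMost_iff empty_iff finite_atMost)
  ultimately show thesis using that out unfolding Lt_def by simp
qed

lemma kometo_loss_le:
  assumes part: "hier_part K P xr" and par: "params_ok K \<nu> \<rho> d C" and fS: "in_S K P \<nu> \<rho> d C f"
    and fid: "fidelities_ok lam zc" and bias: "bias_function f fz \<zeta>"
    and selc: "valid_sel selc" and selj: "valid_sel selj"
    and Lt: "1 \<le> Lambda_tilde K \<Lambda>" and j: "exp (real j) \<le> real (Lambda_tilde K \<Lambda>)"
    and small_bias: "\<zeta> (zc (exp (real j))) \<le> \<nu> * \<rho> ^ H"
    and budget: "4 * C * real H * exp (real j) * \<rho> powr (- d * real H) \<le> real (Lambda_tilde K \<Lambda>)"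
  shows "(SUP x. f x) - f (kometo K fz zc xr selc selj \<Lambda>)
           \<le> 3 * \<nu> * \<rho> ^ H + 2 * \<zeta> (zc (real (Lambda_tilde K \<Lambda>)))"
proof -
  interpret kometo_run K fz zc xr selc "Lambda_tilde K \<Lambda>" by unfold_locales (rule selc)
  obtain xs where fmax: "\<forall>x. f x \<le> f xs"
    and fpath: "\<forall>h i. i < K ^ h \<and> xs \<in> P h i \<longrightarrow> (\<forall>x\<in>P h i. f x \<ge> f xs - \<nu> * \<rho> ^ h)"
    and fcnt: "\<forall>h. real (card {i. i < K ^ h \<and> (SUP x\<in>P h i. f x) \<ge> f xs - 3 * \<nu> * \<rho> ^ h})
                 \<le> C * \<rho> powr (- d * real h)"
    using fS unfolding in_S_def by blast
  have \<nu>: "0 < \<nu>" and \<rho>: "0 < \<rho>" "\<rho> < 1" using par by (auto simp: params_ok_def)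
  have "real j \<le> ln (real (Lambda_tilde K \<Lambda>))" using j Lt by (simp add: ln_ge_iff)
  then have jmax: "j \<le> nat \<lfloor>ln (real (Lambda_tilde K \<Lambda>))\<rfloor>" by linarith
  obtain i where i: "i < K ^ Suc H" "xs \<in> P (Suc H) i"
    and flag: "(Suc H, i, j) \<in> fst (run_depths
                 (open_cell K 0 0 (nat \<lfloor>ln (real (Lambda_tilde K \<Lambda>))\<rfloor>) ({}, {})) (Lambda_tilde K \<Lambda>))"
    using optimal_cell_flagged[OF part par fid bias fmax fpath fcnt jmax small_bias budget] by blast
  obtain h' i' where "fval fz zc xr (Suc H) i j \<le> fval fz zc xr h' i' j"
    and out: "fz (zc (real (Lambda_tilde K \<Lambda>))) (xr h' i')
                \<le> fz (zc (real (Lambda_tilde K \<Lambda>))) (kometo K fz zc xr selc selj \<Lambda>)"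
    using kometo_recommendation[OF selc selj flag jmax] by blast
  then have "f (xr (Suc H) i) \<le> f (xr h' i') + 2 * \<zeta> (zc (exp (real j)))"
    using bias_function_order[OF bias fidelities_ok_in_unit[OF fid]] by (simp add: fval_def)
  moreover have "f (xr h' i') \<le> f (kometo K fz zc xr selc selj \<Lambda>) + 2 * \<zeta> (zc (real (Lambda_tilde K \<Lambda>)))"
    using bias_function_order[OF bias fidelities_ok_in_unit[OF fid] out] Lt by simp
  moreover have "f xs - \<nu> * \<rho> ^ Suc H \<le> f (xr (Suc H) i)"
    using fpath i hier_part_rep_mem[OF part i(1)] by blast
  moreover have "\<nu> * \<rho> ^ Suc H \<le> \<nu> * \<rho> ^ H" using \<nu> \<rho> by (simp add: power_decreasing)
  moreover have "(SUP x. f x) = f xs" using fmax by (intro cSup_eq_maximum) auto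
  ultimately show ?thesis using small_bias by linarith
qed

lemma ex_valid_sel: "\<exists>sel :: 'a set \<Rightarrow> ('a \<Rightarrow> real) \<Rightarrow> 'a. valid_sel sel"
proof
  show "valid_sel (\<lambda>S \<phi>. arg_min_on (\<lambda>x. - \<phi> x) S)"
    unfolding valid_sel_def using arg_min_if_finite by (metis neg_less_iff_less not_le)
qed

lemma kometo_regret_le:
  assumes part: "hier_part K P xr" and par: "params_ok K \<nu> \<rho> d C" and fS: "in_S K P \<nu> \<rho> d C f"
    and fid: "fidelities_ok lam zc" and bias: "bias_function f fz \<zeta>"
    and Lt: "1 \<le> Lambda_tilde K \<Lambda>" and j: "exp (real j) \<le> real (Lambda_tilde K \<Lambda>)"
    and small_bias: "\<zeta> (zc (exp (real j))) \<le> \<nu> * \<rho> ^ H"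
    and budget: "4 * C * real H * exp (real j) * \<rho> powr (- d * real H) \<le> real (Lambda_tilde K \<Lambda>)"
  shows "kometo_regret K fz zc xr f \<Lambda> \<le> 3 * \<nu> * \<rho> ^ H + 2 * \<zeta> (zc (real (Lambda_tilde K \<Lambda>)))"
  unfolding kometo_regret_def
proof (rule cSup_least)
  obtain s1 :: "(nat \<times> nat) set \<Rightarrow> (nat \<times> nat \<Rightarrow> real) \<Rightarrow> nat \<times> nat" where "valid_sel s1"
    using ex_valid_sel by blast
  moreover obtain s2 :: "nat set \<Rightarrow> (nat \<Rightarrow> real) \<Rightarrow> nat" where "valid_sel s2"
    using ex_valid_sel by blast
  ultimately show "{(SUP x. f x) - f (kometo K fz zc xr selc selj \<Lambda>) | selc selj.
      valid_sel selc \<and> valid_sel selj} \<noteq> {}"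
    by blast
next
  fix v assume "v \<in> {(SUP x. f x) - f (kometo K fz zc xr selc selj \<Lambda>) | selc selj.
      valid_sel selc \<and> valid_sel selj}"
  then obtain selc selj where "v = (SUP x. f x) - f (kometo K fz zc xr selc selj \<Lambda>)"
    "valid_sel selc" "valid_sel selj"
    by blast
  then show "v \<le> 3 * \<nu> * \<rho> ^ H + 2 * \<zeta> (zc (real (Lambda_tilde K \<Lambda>)))"
    using kometo_loss_le[OF part par fS fid bias _ _ Lt j small_bias budget] by simp
qed

section \<open>From the reduced budget to the budget\<close>

lemma Lambda_tilde_bounds:
  fixes K :: nat
  assumes K: "1 \<le> K"
  obtains \<kappa> where "0 < \<kappa>"
    "\<forall>\<^sub>F \<Lambda> in at_top. \<Lambda> / (\<kappa> * (ln \<Lambda>)\<^sup>2) \<le> real (Lambda_tilde K \<Lambda>) \<and> real (Lambda_tilde K \<Lambda>) \<le> \<Lambda>"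
proof
  define a where "a = (exp 1 - 1) / (2 * real K * exp 1)"
  define t where "t = (\<lambda>\<Lambda>. a * \<Lambda> / (ln \<Lambda> + 1)\<^sup>2)"
  have "exp (1::real) > 1" by simp
  then have a: "0 < a" using K unfolding a_def by simp
  then show "0 < 8 / a" by simp
  have Lt: "Lambda_tilde K \<Lambda> = nat \<lfloor>t \<Lambda>\<rfloor>" for \<Lambda>
    unfolding Lambda_tilde_def t_def a_def by (simp add: field_simps)
  have lower: "\<forall>\<^sub>F \<Lambda> in at_top. \<Lambda> / (8 / a * (ln \<Lambda>)\<^sup>2) \<le> t \<Lambda> - 1"
    unfolding t_def using a by real_asymp
  have upper: "\<forall>\<^sub>F \<Lambda> in at_top. t \<Lambda> \<le> \<Lambda>"
    unfolding t_def using a by real_asymp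
  have pos: "\<forall>\<^sub>F \<Lambda> in at_top. 0 \<le> \<Lambda> / (8 / a * (ln \<Lambda>)\<^sup>2)"
    using a by real_asymp
  show "\<forall>\<^sub>F \<Lambda> in at_top. \<Lambda> / (8 / a * (ln \<Lambda>)\<^sup>2) \<le> real (Lambda_tilde K \<Lambda>) \<and> real (Lambda_tilde K \<Lambda>) \<le> \<Lambda>"
    using lower upper pos
  proof eventually_elim
    case (elim \<Lambda>)
    then have "t \<Lambda> - 1 \<le> real (Lambda_tilde K \<Lambda>) \<and> real (Lambda_tilde K \<Lambda>) \<le> t \<Lambda>"
      unfolding Lt by linarith
    then show ?case using elim by linarith
  qed
qed

lemma filterlim_Lambda_tilde:
  fixes K :: nat
  assumes "1 \<le> K"
  shows "filterlim (\<lambda>\<Lambda>. real (Lambda_tilde K \<Lambda>)) at_top at_top"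
proof -
  obtain \<kappa> where \<kappa>: "0 < \<kappa>" and bounds:
      "\<forall>\<^sub>F \<Lambda> in at_top. \<Lambda> / (\<kappa> * (ln \<Lambda>)\<^sup>2) \<le> real (Lambda_tilde K \<Lambda>) \<and> real (Lambda_tilde K \<Lambda>) \<le> \<Lambda>"
    using Lambda_tilde_bounds[OF assms] by blast
  have "filterlim (\<lambda>\<Lambda>::real. \<Lambda> / (\<kappa> * (ln \<Lambda>)\<^sup>2)) at_top at_top" using \<kappa> by real_asymp
  then show ?thesis by (rule filterlim_at_top_mono) (use bounds in \<open>eventually_elim, simp\<close>)
qed

lemma eventually_Lambda_tilde:
  fixes K :: nat
  assumes "1 \<le> K" "\<forall>\<^sub>F x in at_top. P x"
  shows "\<forall>\<^sub>F \<Lambda> in at_top. P (real (Lambda_tilde K \<Lambda>))"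
  using filterlim_Lambda_tilde[OF assms(1)] assms(2) unfolding filterlim_iff by blast

lemma ln_powr_mult_powr_le:
  fixes x \<Lambda> \<kappa> m p :: real
  assumes x: "1 \<le> x" "x \<le> \<Lambda>" "\<Lambda> / (\<kappa> * (ln \<Lambda>)\<^sup>2) \<le> x"
    and \<kappa>: "0 < \<kappa>" and l: "1 \<le> ln \<Lambda>" and m: "0 \<le> m" and p: "0 < p"
  shows "ln x powr m * x powr - p \<le> \<kappa> powr p * ln \<Lambda> ^ nat \<lceil>m + 2 * p\<rceil> * \<Lambda> powr - p"
proof -
  define l where "l = ln \<Lambda>"
  have \<Lambda>: "0 < \<Lambda>" using x by linarith
  have l: "1 \<le> l" using assms unfolding l_def by simp
  then have \<kappa>l: "0 < \<kappa> * l\<^sup>2" using \<kappa> by simp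
  have "ln x powr m \<le> l powr m" using x \<Lambda> m unfolding l_def by (intro powr_mono2) auto
  moreover have "x powr - p \<le> (\<Lambda> / (\<kappa> * l\<^sup>2)) powr - p"
    using x \<Lambda> \<kappa>l p unfolding l_def by (intro powr_mono2') auto
  moreover have "(\<Lambda> / (\<kappa> * l\<^sup>2)) powr - p = \<kappa> powr p * l powr (2 * p) * \<Lambda> powr - p"
  proof -
    have "l\<^sup>2 = l powr 2" using l by (simp add: powr_realpow)
    then have "(l\<^sup>2) powr p = l powr (2 * p)" by (simp only: powr_powr)
    moreover have "(\<Lambda> / (\<kappa> * l\<^sup>2)) powr - p = (\<kappa> * l\<^sup>2) powr p * \<Lambda> powr - p"
      using \<Lambda> \<kappa> l by (simp add: powr_divide powr_minus_divide)
    ultimately show ?thesis using \<kappa> l by (simp add: powr_mult)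
  qed
  ultimately have "ln x powr m * x powr - p \<le> l powr m * (\<kappa> powr p * l powr (2 * p) * \<Lambda> powr - p)"
    by (intro mult_mono) auto
  also have "\<dots> = \<kappa> powr p * (l powr m * l powr (2 * p)) * \<Lambda> powr - p" by (simp add: ac_simps)
  also have "l powr m * l powr (2 * p) \<le> l ^ nat \<lceil>m + 2 * p\<rceil>"
  proof -
    have "l powr m * l powr (2 * p) = l powr (m + 2 * p)" by (simp add: powr_add)
    also have "\<dots> \<le> l powr real (nat \<lceil>m + 2 * p\<rceil>)" using l by (intro powr_mono) linarith+
    finally show ?thesis using l by (simp add: powr_realpow)
  qed
  finally show ?thesis unfolding l_def by (simp add: mult_left_mono mult_right_mono)
qed

lemma powr_ge_of_polylog_lower_bound:
  fixes x \<Lambda> \<kappa> \<gamma> :: real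
  assumes low: "\<Lambda> / (\<kappa> * (ln \<Lambda>)\<^sup>2) \<le> x" and \<Lambda>: "0 < \<Lambda>" and \<kappa>: "0 < \<kappa>" and l: "1 \<le> ln \<Lambda>"
    and \<gamma>: "0 < \<gamma>" "\<gamma> \<le> 1"
  shows "\<Lambda> powr \<gamma> / (\<kappa> powr \<gamma> * (ln \<Lambda>)\<^sup>2) \<le> x powr \<gamma>"
proof -
  have "((ln \<Lambda>)\<^sup>2) powr \<gamma> \<le> ((ln \<Lambda>)\<^sup>2) powr 1" using l \<gamma> by (intro powr_mono) auto
  then have "(\<kappa> * (ln \<Lambda>)\<^sup>2) powr \<gamma> \<le> \<kappa> powr \<gamma> * (ln \<Lambda>)\<^sup>2" using \<kappa> l by (simp add: powr_mult mult_left_mono)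
  then have "\<Lambda> powr \<gamma> / (\<kappa> powr \<gamma> * (ln \<Lambda>)\<^sup>2) \<le> \<Lambda> powr \<gamma> / (\<kappa> * (ln \<Lambda>)\<^sup>2) powr \<gamma>"
    using \<kappa> l by (intro divide_left_mono) auto
  also have "\<dots> = (\<Lambda> / (\<kappa> * (ln \<Lambda>)\<^sup>2)) powr \<gamma>" using \<Lambda> \<kappa> l by (simp add: powr_divide)
  also have "\<dots> \<le> x powr \<gamma>" using low \<Lambda> \<kappa> l \<gamma> by (intro powr_mono2) auto
  finally show ?thesis .
qed

lemma Otilde_on_via_Lambda_tilde:
  fixes K :: nat and r F :: "real \<Rightarrow> real" and p m :: real
  assumes K: "1 \<le> K" and p: "0 < p" and m: "0 \<le> m"
    and F: "F \<in> O(\<lambda>x. ln x powr m * x powr - p)"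
    and bound: "\<forall>\<^sub>F x in at_top. \<forall>\<Lambda>. real (Lambda_tilde K \<Lambda>) = x \<longrightarrow> r \<Lambda> \<le> F x"
  shows "Otilde_on S r (\<lambda>\<Lambda>. \<Lambda> powr - p)"
proof -
  obtain c where c: "0 < c" and Fc: "\<forall>\<^sub>F x in at_top. norm (F x) \<le> c * norm (ln x powr m * x powr - p)"
    using landau_o.bigE[OF F] by blast
  obtain \<kappa> where \<kappa>: "0 < \<kappa>" and Lt: "\<forall>\<^sub>F \<Lambda> in at_top.
      \<Lambda> / (\<kappa> * (ln \<Lambda>)\<^sup>2) \<le> real (Lambda_tilde K \<Lambda>) \<and> real (Lambda_tilde K \<Lambda>) \<le> \<Lambda>"
    using Lambda_tilde_bounds[OF K] by blast
  have "\<forall>\<^sub>F x in at_top. (\<forall>\<Lambda>. real (Lambda_tilde K \<Lambda>) = x \<longrightarrow> r \<Lambda> \<le> c * (ln x powr m * x powr - p))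
      \<and> 1 \<le> x" (is "\<forall>\<^sub>F x in at_top. ?P x")
    using bound Fc eventually_ge_at_top[of 1] by eventually_elim fastforce
  then have rx: "\<forall>\<^sub>F \<Lambda> in at_top. r \<Lambda> \<le> c * (ln (real (Lambda_tilde K \<Lambda>)) powr m
        * real (Lambda_tilde K \<Lambda>) powr - p) \<and> 1 \<le> real (Lambda_tilde K \<Lambda>)"
    by (rule eventually_mono[OF eventually_Lambda_tilde[OF K, of ?P]]) blast+
  have "\<forall>\<^sub>F \<Lambda> in at_top. \<Lambda> \<in> S \<longrightarrow>
      r \<Lambda> \<le> c * \<kappa> powr p * (ln \<Lambda>) ^ nat \<lceil>m + 2 * p\<rceil> * \<Lambda> powr - p"
    using rx Lt eventually_ge_at_top[of "exp 1"]
  proof eventually_elim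
    case (elim \<Lambda>)
    then have "1 \<le> ln \<Lambda>" using exp_gt_zero[of 1] by (simp add: ln_ge_iff)
    then have "ln (real (Lambda_tilde K \<Lambda>)) powr m * real (Lambda_tilde K \<Lambda>) powr - p
        \<le> \<kappa> powr p * ln \<Lambda> ^ nat \<lceil>m + 2 * p\<rceil> * \<Lambda> powr - p"
      using elim \<kappa> m p by (intro ln_powr_mult_powr_le) auto
    then have "c * (ln (real (Lambda_tilde K \<Lambda>)) powr m * real (Lambda_tilde K \<Lambda>) powr - p)
        \<le> c * \<kappa> powr p * ln \<Lambda> ^ nat \<lceil>m + 2 * p\<rceil> * \<Lambda> powr - p"
      using c by (simp add: mult_left_mono mult.assoc)
    then show ?case using elim(1) by linarith
  qed
  then show ?thesis unfolding Otilde_on_def by blast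
qed

lemma expOtilde_on_via_Lambda_tilde:
  fixes K :: nat and r g :: "real \<Rightarrow> real" and a c \<gamma> :: real
  assumes K: "1 \<le> K" and \<gamma>: "0 < \<gamma>" "\<gamma> \<le> 1" and c: "0 < c" and a: "0 \<le> a"
    and g: "\<forall>\<^sub>F \<Lambda> in at_top. g \<Lambda> \<le> \<Lambda> powr \<gamma>"
    and bound: "\<forall>\<^sub>F x in at_top. \<forall>\<Lambda>. real (Lambda_tilde K \<Lambda>) = x \<longrightarrow> r \<Lambda> \<le> a * exp (- c * x powr \<gamma>)"
  shows "expOtilde_on S r g"
proof -
  obtain \<kappa> where \<kappa>: "0 < \<kappa>" and Lt: "\<forall>\<^sub>F \<Lambda> in at_top.
      \<Lambda> / (\<kappa> * (ln \<Lambda>)\<^sup>2) \<le> real (Lambda_tilde K \<Lambda>) \<and> real (Lambda_tilde K \<Lambda>) \<le> \<Lambda>"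
    using Lambda_tilde_bounds[OF K] by blast
  have rx: "\<forall>\<^sub>F \<Lambda> in at_top. r \<Lambda> \<le> a * exp (- c * real (Lambda_tilde K \<Lambda>) powr \<gamma>)"
    by (rule eventually_mono[OF eventually_Lambda_tilde[OF K bound]]) blast
  have "\<forall>\<^sub>F \<Lambda> in at_top. \<Lambda> \<in> S \<longrightarrow> r \<Lambda> \<le> a * exp (- (c / \<kappa> powr \<gamma>) * g \<Lambda> / (ln \<Lambda>) ^ 2)"
    using rx Lt g eventually_ge_at_top[of "exp 1"]
  proof eventually_elim
    case (elim \<Lambda>)
    define l where "l = ln \<Lambda>"
    have \<Lambda>: "0 < \<Lambda>" using elim(4) exp_gt_zero[of 1] by linarith
    have l: "1 \<le> l" using elim(4) \<Lambda> unfolding l_def by (simp add: ln_ge_iff)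
    have "g \<Lambda> / (\<kappa> powr \<gamma> * l\<^sup>2) \<le> \<Lambda> powr \<gamma> / (\<kappa> powr \<gamma> * l\<^sup>2)"
      using elim(3) \<kappa> l by (intro divide_right_mono) auto
    also have "\<dots> \<le> real (Lambda_tilde K \<Lambda>) powr \<gamma>"
      using elim(2) \<Lambda> \<kappa> l \<gamma> unfolding l_def by (intro powr_ge_of_polylog_lower_bound) auto
    finally have "c * (g \<Lambda> / (\<kappa> powr \<gamma> * l\<^sup>2)) \<le> c * real (Lambda_tilde K \<Lambda>) powr \<gamma>"
      using c by (intro mult_left_mono) auto
    then have "exp (- c * real (Lambda_tilde K \<Lambda>) powr \<gamma>) \<le> exp (- (c / \<kappa> powr \<gamma>) * g \<Lambda> / l ^ 2)"
      by simp
    then show ?case using elim(1) a unfolding l_def by (meson mult_left_mono order.trans)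
  qed
  moreover have "0 < c / \<kappa> powr \<gamma>" using c \<kappa> by simp
  ultimately show ?thesis unfolding expOtilde_on_def by blast
qed

lemma Otilde_on_eventually_empty: "\<forall>\<^sub>F \<Lambda> in at_top. \<Lambda> \<notin> S \<Longrightarrow> Otilde_on S r g"
  unfolding Otilde_on_def by (rule exI[of _ 0], rule exI[of _ 0]) (auto elim: eventually_mono)

lemma expOtilde2_on_eventually_empty: "\<forall>\<^sub>F \<Lambda> in at_top. \<Lambda> \<notin> S \<Longrightarrow> expOtilde2_on S r g1 g2"
  unfolding expOtilde2_on_def by (rule exI[of _ 0], rule exI[of _ 1], rule exI[of _ 0],
      rule exI[of _ 0], rule exI[of _ 1]) (auto elim: eventually_mono)

section \<open>Choice of level and depth\<close>

lemma power_eq_exp_ln_inverse: "0 < \<rho> \<Longrightarrow> \<rho> ^ n = exp (- ln (1 / \<rho>) * real n)"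
  for \<rho> :: real
  by (simp add: ln_div exp_of_nat_mult[symmetric] mult.commute powr_realpow[symmetric] powr_def)

lemma power_le_exp_ln_inverse:
  fixes \<rho> y :: real
  assumes \<rho>: "0 < \<rho>" "\<rho> < 1" and y: "y \<le> real H + 1"
  shows "\<rho> ^ H \<le> exp (ln (1 / \<rho>)) * exp (- ln (1 / \<rho>) * y)"
proof -
  have "ln (1 / \<rho>) * y \<le> ln (1 / \<rho>) * (real H + 1)" using \<rho> y by (intro mult_left_mono) auto
  then have "- ln (1 / \<rho>) * real H \<le> ln (1 / \<rho>) + - ln (1 / \<rho>) * y" by (simp add: algebra_simps)
  then show ?thesis by (simp add: power_eq_exp_ln_inverse[OF \<rho>(1)] exp_add[symmetric])
qed

lemma le_exp_nat_ceiling_ln: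
  fixes a :: real
  assumes "1 \<le> a"
  shows "a \<le> exp (real (nat \<lceil>ln a\<rceil>))"
proof -
  have "ln a \<le> real (nat \<lceil>ln a\<rceil>)" using ln_ge_zero[OF assms] by linarith
  then show ?thesis using assms by (metis exp_le_cancel_iff exp_ln less_le_trans zero_less_one)
qed

lemma exists_level_poly_bias:
  fixes \<Phi> :: "real \<Rightarrow> real" and A \<alpha> \<nu> \<rho> :: real and H :: nat
  assumes \<Phi>: "\<forall>c\<ge>1. \<Phi> c \<le> A / c powr \<alpha>" and A: "0 < A" and \<alpha>: "0 < \<alpha>" and \<nu>: "0 < \<nu>"
    and \<rho>: "0 < \<rho>" "\<rho> < 1"
  obtains j :: nat where "\<Phi> (exp (real j)) \<le> \<nu> * \<rho> ^ H"
    "exp (real j) \<le> exp 1 * (max A \<nu> / \<nu>) powr (1 / \<alpha>) * exp (ln (1 / \<rho>) * real H / \<alpha>)"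
proof
  define L where "L = ln (1 / \<rho>)"
  define l0 where "l0 = ln (max A \<nu> / \<nu>)"
  define t where "t = (l0 + L * real H) / \<alpha>"
  have L: "0 < L" unfolding L_def using \<rho> by simp
  have l0: "0 \<le> l0" unfolding l0_def using \<nu> by simp
  have "0 \<le> t" using L l0 \<alpha> unfolding t_def by simp
  then have t: "t \<le> real (nat \<lceil>t\<rceil>)" "real (nat \<lceil>t\<rceil>) \<le> t + 1" by linarith+
  have "\<Phi> (exp (real (nat \<lceil>t\<rceil>))) \<le> A / exp (real (nat \<lceil>t\<rceil>)) powr \<alpha>" using \<Phi> by simp
  also have "\<dots> = A / exp (real (nat \<lceil>t\<rceil>) * \<alpha>)" by (simp add: powr_def)
  also have "\<dots> \<le> max A \<nu> / exp (l0 + L * real H)"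
  proof (rule frac_le)
    show "exp (l0 + L * real H) \<le> exp (real (nat \<lceil>t\<rceil>) * \<alpha>)"
      using t(1) \<alpha> unfolding t_def by (simp add: divide_le_eq mult.commute)
  qed (use A in auto)
  also have "\<dots> = max A \<nu> * exp (- (L * real H + l0))" by (simp add: exp_minus[symmetric] divide_inverse add.commute)
  also have "\<dots> = max A \<nu> * (exp (- L * real H) / exp l0)" by (simp add: exp_diff[symmetric])
  also have "\<dots> = \<nu> * exp (- L * real H)" using \<nu> unfolding l0_def by simp
  also have "\<dots> = \<nu> * \<rho> ^ H" unfolding L_def power_eq_exp_ln_inverse[OF \<rho>(1)] ..
  finally show "\<Phi> (exp (real (nat \<lceil>t\<rceil>))) \<le> \<nu> * \<rho> ^ H" .
  have "exp (real (nat \<lceil>t\<rceil>)) \<le> exp (t + 1)" using t(2) by simp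
  also have "\<dots> = exp 1 * exp (l0 / \<alpha>) * exp (L * real H / \<alpha>)"
    unfolding t_def by (simp add: exp_add[symmetric] add_divide_distrib)
  also have "exp (l0 / \<alpha>) = (max A \<nu> / \<nu>) powr (1 / \<alpha>)"
    unfolding l0_def using \<nu> by (simp add: powr_def)
  finally show "exp (real (nat \<lceil>t\<rceil>)) \<le> exp 1 * (max A \<nu> / \<nu>) powr (1 / \<alpha>) * exp (ln (1 / \<rho>) * real H / \<alpha>)"
    unfolding L_def .
qed

lemma exists_level_exp_bias:
  fixes \<Phi> :: "real \<Rightarrow> real" and B \<beta> \<sigma> \<nu> \<rho> :: real and H :: nat
  assumes \<Phi>: "\<forall>c\<ge>1. \<Phi> c \<le> B * exp (- (c powr \<beta>) / \<sigma>)" and B: "0 < B" and \<beta>: "0 < \<beta>" and \<sigma>: "0 < \<sigma>"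
    and \<nu>: "0 < \<nu>" and \<rho>: "0 < \<rho>" "\<rho> < 1"
  obtains j :: nat where "\<Phi> (exp (real j)) \<le> \<nu> * \<rho> ^ H"
    "exp (real j) \<le> exp 1 * (\<sigma> * (ln (1 / \<rho>) * real H + ln (max B \<nu> / \<nu>)) + 1) powr (1 / \<beta>)"
proof
  define L where "L = ln (1 / \<rho>)"
  define l0 where "l0 = ln (max B \<nu> / \<nu>)"
  define s where "s = \<sigma> * (L * real H + l0) + 1"
  define t where "t = ln s / \<beta>"
  have L: "0 < L" unfolding L_def using \<rho> by simp
  have l0: "0 \<le> l0" unfolding l0_def using \<nu> by simp
  have s: "1 \<le> s" unfolding s_def using \<sigma> L l0 by simp
  have "0 \<le> t" using s \<beta> unfolding t_def by simp
  then have t: "t \<le> real (nat \<lceil>t\<rceil>)" "real (nat \<lceil>t\<rceil>) \<le> t + 1" by linarith+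
  have "ln s \<le> real (nat \<lceil>t\<rceil>) * \<beta>" using t(1) \<beta> unfolding t_def by (simp add: divide_le_eq)
  then have "s \<le> exp (real (nat \<lceil>t\<rceil>) * \<beta>)" using s
    by (metis exp_le_cancel_iff exp_ln less_le_trans zero_less_one)
  then have "L * real H + l0 \<le> exp (real (nat \<lceil>t\<rceil>)) powr \<beta> / \<sigma>"
    using \<sigma> unfolding s_def by (simp add: powr_def le_divide_eq mult.commute)
  then have "B * exp (- (exp (real (nat \<lceil>t\<rceil>)) powr \<beta>) / \<sigma>) \<le> max B \<nu> * exp (- (L * real H + l0))"
    using B by (intro mult_mono) auto
  then have "\<Phi> (exp (real (nat \<lceil>t\<rceil>))) \<le> max B \<nu> * exp (- (L * real H + l0))"
    using \<Phi> by (meson one_le_exp_iff of_nat_0_le_iff order_trans)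
  also have "\<dots> = max B \<nu> * (exp (- L * real H) / exp l0)" by (simp add: exp_diff[symmetric])
  also have "\<dots> = \<nu> * exp (- L * real H)" using \<nu> unfolding l0_def by simp
  also have "\<dots> = \<nu> * \<rho> ^ H" unfolding L_def power_eq_exp_ln_inverse[OF \<rho>(1)] ..
  finally show "\<Phi> (exp (real (nat \<lceil>t\<rceil>))) \<le> \<nu> * \<rho> ^ H" .
  have "exp (real (nat \<lceil>t\<rceil>)) \<le> exp (t + 1)" using t(2) by simp
  also have "\<dots> = exp 1 * s powr (1 / \<beta>)" unfolding t_def using s by (simp add: powr_def exp_add)
  finally show "exp (real (nat \<lceil>t\<rceil>)) \<le> exp 1 * (\<sigma> * (ln (1 / \<rho>) * real H + ln (max B \<nu> / \<nu>)) + 1) powr (1 / \<beta>)"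
    unfolding s_def L_def l0_def .
qed

lemma depth_choice:
  fixes \<rho> D Q M x :: real
  defines "H \<equiv> nat \<lfloor>ln (x / (Q * M)) / (D * ln (1 / \<rho>))\<rfloor>"
  assumes \<rho>: "0 < \<rho>" "\<rho> < 1" and D: "0 < D" and Q: "1 \<le> Q"
    and M: "1 \<le> M" "ln x / (D * ln (1 / \<rho>)) \<le> M" and QM: "Q * M \<le> x"
  shows "real H \<le> M" and "exp (ln (1 / \<rho>) * real H * D) \<le> x / (Q * M)"
    and "\<rho> ^ H \<le> exp (ln (1 / \<rho>)) * (Q * M / x) powr (1 / D)"
proof -
  define L where "L = ln (1 / \<rho>)"
  define u where "u = ln (x / (Q * M)) / (D * L)"
  have L: "0 < L" unfolding L_def using \<rho> by simp
  have QM1: "1 \<le> Q * M" using mult_mono[OF Q M(1)] Q by simp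
  then have x: "0 < x" "1 \<le> x / (Q * M)" using QM by auto
  then have "0 \<le> u" unfolding u_def using D L by simp
  then have Hu: "real H \<le> u" "u < real H + 1" unfolding H_def u_def L_def by linarith+
  have "x / (Q * M) \<le> x" using x QM1 by (simp add: divide_le_eq mult_le_cancel_left1)
  then have "u \<le> ln x / (D * L)" unfolding u_def using x D L by (intro divide_right_mono) auto
  then show "real H \<le> M" using Hu M(2) unfolding L_def by linarith
  have "L * real H * D \<le> ln (x / (Q * M))"
    using Hu(1) D L unfolding u_def by (simp add: field_simps)
  then show "exp (ln (1 / \<rho>) * real H * D) \<le> x / (Q * M)"
    using x unfolding L_def by (metis exp_le_cancel_iff exp_ln less_le_trans zero_less_one)
  have "\<rho> ^ H = exp (- L * real H)" unfolding L_def by (rule power_eq_exp_ln_inverse[OF \<rho>(1)])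
  also have "\<dots> \<le> exp (L + - (ln (x / (Q * M)) / D))"
    using Hu(2) L D unfolding u_def by (simp add: field_simps)
  also have "\<dots> = exp L * exp (- (ln (x / (Q * M)) / D))" by (simp only: exp_add)
  also have "exp (- (ln (x / (Q * M)) / D)) = (Q * M / x) powr (1 / D)"
  proof -
    have "ln (Q * M / x) = - ln (x / (Q * M))" using x QM1 by (simp add: ln_div)
    then show ?thesis using x QM1 Q M by (simp add: powr_def)
  qed
  finally show "\<rho> ^ H \<le> exp (ln (1 / \<rho>)) * (Q * M / x) powr (1 / D)" unfolding L_def .
qed

lemma depth_budget_fits:
  fixes \<rho> d D C Q M x :: real and H j :: nat
  assumes \<rho>: "0 < \<rho>" "\<rho> < 1" and d: "0 \<le> d" "d \<le> D" and C: "1 < C" and Q: "1 \<le> Q" and M: "1 \<le> M"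
    and HM: "real H \<le> M" and depth: "exp (ln (1 / \<rho>) * real H * D) \<le> x / (Q * M)"
    and j: "4 * C * exp (real j) \<le> Q * exp (ln (1 / \<rho>) * real H * (D - d))"
  shows "4 * C * real H * exp (real j) * \<rho> powr (- d * real H) \<le> x" and "exp (real j) \<le> x"
proof -
  define L where "L = ln (1 / \<rho>)"
  have L: "0 < L" unfolding L_def using \<rho> by simp
  have QeLHD: "Q * exp (L * real H * D) \<le> x / M"
    using depth Q M unfolding L_def by (simp add: field_simps)
  moreover have "0 < Q * exp (L * real H * D)" using Q by simp
  ultimately have "0 < x / M" by linarith
  then have x: "0 \<le> x" using M by (simp add: zero_less_divide_iff)
  have "\<rho> powr (- d * real H) = exp (L * real H * d)"
    unfolding L_def using \<rho> by (simp add: powr_def ln_div)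
  then have "4 * C * exp (real j) * \<rho> powr (- d * real H) = 4 * C * exp (real j) * exp (L * real H * d)"
    by simp
  also have "\<dots> \<le> Q * exp (L * real H * (D - d)) * exp (L * real H * d)"
    using j unfolding L_def by (intro mult_right_mono) auto
  also have "\<dots> = Q * exp (L * real H * D)" by (simp add: mult.assoc exp_add[symmetric] algebra_simps)
  finally have "real H * (4 * C * exp (real j) * \<rho> powr (- d * real H)) \<le> M * (x / M)"
    using HM QeLHD C by (intro mult_mono) auto
  then show "4 * C * real H * exp (real j) * \<rho> powr (- d * real H) \<le> x"
    using M by (simp add: ac_simps)
  have "exp (real j) \<le> 4 * C * exp (real j)" using C by simp
  also have "\<dots> \<le> Q * exp (L * real H * (D - d))" using j unfolding L_def .
  also have "\<dots> \<le> Q * exp (L * real H * D)"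
  proof -
    have "L * real H * (D - d) \<le> L * real H * D" using L d by (intro mult_left_mono) auto
    then show ?thesis using Q by (intro mult_left_mono) auto
  qed
  also have "\<dots> \<le> x / M" by (rule QeLHD)
  also have "\<dots> \<le> x" using M x by (simp add: divide_le_eq mult_le_cancel_left1)
  finally show "exp (real j) \<le> x" .
qed

lemma powr_balance:
  fixes \<beta> W x :: real
  assumes \<beta>: "0 < \<beta>" and W: "0 < W" and x: "0 < x"
  defines "\<kappa> \<equiv> W powr - (\<beta> / (1 + \<beta>))" and "T \<equiv> x powr (\<beta> / (1 + \<beta>))"
  shows "W * (\<kappa> * T) * (\<kappa> * T) powr (1 / \<beta>) = x"
proof -
  have "0 < \<beta> + \<beta> * \<beta>" by (intro add_pos_pos mult_pos_pos \<beta>)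
  then have e: "\<beta> / (1 + \<beta>) * (1 + 1 / \<beta>) = 1" using \<beta> by (simp add: field_simps)
  have "(\<kappa> * T) * (\<kappa> * T) powr (1 / \<beta>) = \<kappa> powr (1 + 1 / \<beta>) * T powr (1 + 1 / \<beta>)"
    unfolding \<kappa>_def T_def using W x by (simp add: powr_add powr_mult)
  also have "\<kappa> powr (1 + 1 / \<beta>) = W powr - 1"
    unfolding \<kappa>_def powr_powr mult_minus_left e ..
  also have "T powr (1 + 1 / \<beta>) = x"
    unfolding T_def powr_powr e using x by simp
  finally show ?thesis using W by (simp add: powr_minus field_simps)
qed

text \<open>For \<open>d = 0\<close> the cost \<open>H e^j\<close> grows like \<open>H^(1 + 1/\<beta>)\<close>, so the affordable depth is
  \<open>\<kappa> x^(\<beta>/(1+\<beta>))\<close> for the constant \<open>\<kappa>\<close> below.\<close>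
lemma exp_bias_budget_fits:
  fixes \<beta> C \<sigma> L l0 x :: real and H j :: nat
  defines "\<kappa> \<equiv> (4 * C * exp 1 * (2 * \<sigma> * L) powr (1 / \<beta>)) powr - (\<beta> / (1 + \<beta>))"
  assumes pos: "0 < \<beta>" "0 < C" "0 < \<sigma>" "0 < L" "0 \<le> l0" "0 < x"
    and H: "real H \<le> \<kappa> * x powr (\<beta> / (1 + \<beta>))"
    and large: "\<sigma> * l0 + 1 \<le> \<sigma> * L * (\<kappa> * x powr (\<beta> / (1 + \<beta>)))"
    and j: "exp (real j) \<le> exp 1 * (\<sigma> * (L * real H + l0) + 1) powr (1 / \<beta>)"
  shows "4 * C * real H * exp (real j) \<le> x"
proof -
  define T where "T = x powr (\<beta> / (1 + \<beta>))"
  have \<kappa>: "0 < \<kappa>" unfolding \<kappa>_def using pos by simp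
  have "\<sigma> * L * real H \<le> \<sigma> * L * (\<kappa> * T)" using H pos unfolding T_def by (intro mult_left_mono) auto
  then have "\<sigma> * (L * real H + l0) + 1 \<le> 2 * \<sigma> * L * (\<kappa> * T)" using large unfolding T_def
    by (simp add: algebra_simps)
  moreover have "0 \<le> \<sigma> * (L * real H + l0) + 1" using pos by simp
  ultimately have "(\<sigma> * (L * real H + l0) + 1) powr (1 / \<beta>) \<le> (2 * \<sigma> * L * (\<kappa> * T)) powr (1 / \<beta>)"
    using pos by (intro powr_mono2) auto
  then have "exp (real j) \<le> exp 1 * (2 * \<sigma> * L * (\<kappa> * T)) powr (1 / \<beta>)"
    using j by (meson exp_gt_zero less_imp_le mult_left_mono order.trans)
  then have "4 * C * real H * exp (real j) \<le> 4 * C * (\<kappa> * T) * (exp 1 * (2 * \<sigma> * L * (\<kappa> * T)) powr (1 / \<beta>))"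
    using H pos unfolding T_def by (intro mult_mono) auto
  also have "\<dots> = (4 * C * exp 1 * (2 * \<sigma> * L) powr (1 / \<beta>)) * (\<kappa> * T) * (\<kappa> * T) powr (1 / \<beta>)"
    using pos \<kappa> unfolding T_def by (simp add: powr_mult ac_simps)
  also have "\<dots> = x"
    unfolding \<kappa>_def T_def using pos by (intro powr_balance) auto
  finally show ?thesis .
qed

lemma exists_depth_level_exp_bias:
  fixes \<Phi> :: "real \<Rightarrow> real" and B \<beta> \<sigma> \<nu> \<rho> C x :: real
  defines "\<kappa> \<equiv> (4 * C * exp 1 * (2 * \<sigma> * ln (1 / \<rho>)) powr (1 / \<beta>)) powr - (\<beta> / (1 + \<beta>))"
  assumes \<Phi>: "\<forall>c\<ge>1. \<Phi> c \<le> B * exp (- (c powr \<beta>) / \<sigma>)"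
    and pos: "0 < B" "0 < \<beta>" "0 < \<sigma>" "0 < \<nu>" "0 < C" and \<rho>: "0 < \<rho>" "\<rho> < 1" and x: "0 < x"
    and deep: "1 \<le> \<kappa> * x powr (\<beta> / (1 + \<beta>))"
    and large: "\<sigma> * ln (max B \<nu> / \<nu>) + 1 \<le> \<sigma> * ln (1 / \<rho>) * (\<kappa> * x powr (\<beta> / (1 + \<beta>)))"
  obtains H j :: nat where "1 \<le> H" "\<kappa> * x powr (\<beta> / (1 + \<beta>)) \<le> real H + 1"
    "4 * C * real H * exp (real j) \<le> x" "\<Phi> (exp (real j)) \<le> \<nu> * \<rho> ^ H"
proof -
  define H where "H = nat \<lfloor>\<kappa> * x powr (\<beta> / (1 + \<beta>))\<rfloor>"
  have H: "real H \<le> \<kappa> * x powr (\<beta> / (1 + \<beta>))" "\<kappa> * x powr (\<beta> / (1 + \<beta>)) \<le> real H + 1" "1 \<le> H"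
    using deep unfolding H_def by linarith+
  obtain j :: nat where "\<Phi> (exp (real j)) \<le> \<nu> * \<rho> ^ H"
    and j: "exp (real j) \<le> exp 1 * (\<sigma> * (ln (1 / \<rho>) * real H + ln (max B \<nu> / \<nu>)) + 1) powr (1 / \<beta>)"
    using exists_level_exp_bias[OF \<Phi> pos(1-4) \<rho>] by blast
  moreover have "4 * C * real H * exp (real j) \<le> x"
    using exp_bias_budget_fits[OF _ _ _ _ _ x H(1)[unfolded \<kappa>_def] large[unfolded \<kappa>_def] j] pos \<rho> by simp
  ultimately show thesis using that H by blast
qed

section \<open>Budget regimes\<close>

lemma mult_exp_strict_mono:
  fixes v w :: real
  assumes "0 \<le> v" "v < w"
  shows "v * exp v < w * exp w"
proof -
  have "v * exp v \<le> v * exp w" using assms by (intro mult_left_mono) auto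
  also have "\<dots> < w * exp w" using assms by simp
  finally show ?thesis .
qed

lemma lambertW_mult_exp:
  fixes w :: real
  assumes "0 \<le> w"
  shows "lambertW (w * exp w) = w"
  unfolding lambertW_def
proof (rule the_equality)
  show "0 \<le> w \<and> w * exp w = w * exp w" using assms by simp
  show "v = w" if "0 \<le> v \<and> v * exp v = w * exp w" for v
    using that assms mult_exp_strict_mono[of v w] mult_exp_strict_mono[of w v]
    by (cases v w rule: linorder_cases) auto
qed

lemma lambertW_ge:
  fixes w y :: real
  assumes w: "0 \<le> w" and y: "w * exp w \<le> y"
  shows "w \<le> lambertW y"
proof -
  have "0 \<le> w * exp w" using w by simp
  then have y0: "0 \<le> y" using y by linarith
  have "\<exists>v\<ge>0. v \<le> y \<and> v * exp v = y"
  proof (rule IVT)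
    show "0 * exp 0 \<le> y" "0 \<le> y" using y0 by simp_all
    show "y \<le> y * exp y" using y0 by (simp add: mult_le_cancel_left1)
    show "\<forall>v. 0 \<le> v \<and> v \<le> y \<longrightarrow> isCont (\<lambda>v. v * exp v) v" by (auto intro!: continuous_intros)
  qed
  then obtain v where v: "0 \<le> v" "v * exp v = y" by blast
  then have "lambertW y = v" using lambertW_mult_exp by blast
  then show ?thesis using mult_exp_strict_mono[OF v(1), of w] v(2) y by fastforce
qed

lemma eventually_high_budget_a:
  assumes par: "params_ok K \<nu> \<rho> d C" and A: "0 < A" "0 < \<alpha>"
  shows "\<forall>\<^sub>F \<Lambda> in at_top. high_budget_a K \<nu> \<rho> d C A \<alpha> \<Lambda>"
proof -
  have \<nu>: "0 < \<nu>" and \<rho>: "0 < \<rho>" "\<rho> < 1" and C: "1 < C" and d: "0 \<le> d" and K: "1 \<le> K"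
    using par by (auto simp: params_ok_def)
  define L where "L = ln (1 / \<rho>)"
  define D where "D = d + 1 / \<alpha>"
  define k where "k = \<nu> powr (1 / \<alpha>) * D * L / (4 * C * exp 1 * A powr (1 / \<alpha>))"
  define w where "w = max 0 (D * ln (\<nu> / (exp \<alpha> * A)))"
  have L: "0 < L" unfolding L_def using \<rho> by simp
  have D: "0 < D" unfolding D_def using d A by (simp add: add_nonneg_pos)
  have k: "0 < k" unfolding k_def using \<nu> A C D L by simp
  have "\<forall>\<^sub>F \<Lambda> in at_top. w * exp w / k \<le> real (Lambda_tilde K \<Lambda>)"
    by (rule eventually_Lambda_tilde[OF K eventually_ge_at_top])
  then show ?thesis
  proof eventually_elim
    case (elim \<Lambda>)
    have "w * exp w \<le> k * real (Lambda_tilde K \<Lambda>)" using elim k by (simp add: divide_le_eq mult.commute)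
    then have "w \<le> lambertW (k * real (Lambda_tilde K \<Lambda>))" by (intro lambertW_ge) (simp_all add: w_def)
    then have "ln (\<nu> / (exp \<alpha> * A)) \<le> lambertW (k * real (Lambda_tilde K \<Lambda>)) / D"
      using D unfolding w_def by (simp add: le_divide_eq mult.commute)
    moreover have "real (Lambda_tilde K \<Lambda>) * \<nu> powr (1 / \<alpha>) * (d + 1 / \<alpha>) * ln (1 / \<rho>)
        / (4 * C * exp 1 * A powr (1 / \<alpha>)) = k * real (Lambda_tilde K \<Lambda>)"
      unfolding k_def D_def L_def by simp
    then have "L * h1_a K \<nu> \<rho> d C A \<alpha> \<Lambda> = lambertW (k * real (Lambda_tilde K \<Lambda>)) / D"
      using L unfolding h1_a_def Let_def D_def L_def by simp
    ultimately have "ln (\<nu> / (exp \<alpha> * A)) \<le> L * h1_a K \<nu> \<rho> d C A \<alpha> \<Lambda>" by simp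
    then have "\<nu> * exp (- (L * h1_a K \<nu> \<rho> d C A \<alpha> \<Lambda>)) \<le> \<nu> * exp (- ln (\<nu> / (exp \<alpha> * A)))"
      using \<nu> by simp
    also have "\<dots> = exp \<alpha> * A" using \<nu> A by (simp add: exp_minus ln_div exp_diff)
    finally show ?case unfolding high_budget_a_def L_def using \<rho> by (simp add: powr_def ln_div mult.commute)
  qed
qed

lemma eventually_high_budget_b:
  assumes par: "params_ok K \<nu> \<rho> d C" and B: "0 < B" "0 < \<beta>" "0 < \<sigma>"
  shows "\<forall>\<^sub>F \<Lambda> in at_top. high_budget_b K \<nu> \<rho> d C B \<beta> \<sigma> \<Lambda>"
proof -
  have \<nu>: "0 < \<nu>" and \<rho>: "0 < \<rho>" "\<rho> < 1" and C: "1 < C" and d: "0 \<le> d" and K: "1 \<le> K"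
    using par by (auto simp: params_ok_def)
  define L where "L = ln (1 / \<rho>)"
  define t where "t = max (1 / (2 * \<sigma>)) (ln (B / \<nu>)) / L"
  define Y where "Y = (\<lambda>x. (x / (4 * C * exp 1)) powr (\<beta> / (\<beta> + 1)) * (1 / (2 * \<sigma> * L)) powr (1 / (\<beta> + 1)))"
  define k where "k = \<beta> / (\<beta> + 1) * d * L"
  define w where "w = max 0 (t * k)"
  have L: "0 < L" unfolding L_def using \<rho> by simp
  define threshold where "threshold = (if d = 0 then t else w * exp w / k)"
  have "\<forall>\<^sub>F x in at_top. threshold \<le> Y x" unfolding Y_def using C B L by real_asymp
  then have "\<forall>\<^sub>F \<Lambda> in at_top. threshold \<le> Y (real (Lambda_tilde K \<Lambda>))"
    by (rule eventually_Lambda_tilde[OF K])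
  then show ?thesis
  proof eventually_elim
    case (elim \<Lambda>)
    have h1: "h1_b K \<rho> d C \<beta> \<sigma> \<Lambda> = (if d = 0 then Y (real (Lambda_tilde K \<Lambda>))
        else (\<beta> + 1) / (\<beta> * d * L) * lambertW (k * Y (real (Lambda_tilde K \<Lambda>))))"
      unfolding h1_b_def Let_def Y_def k_def L_def by simp
    show ?case
    proof (cases "d = 0")
      case True
      then show ?thesis using elim h1 unfolding high_budget_b_def threshold_def t_def L_def by simp
    next
      case False
      then have k: "0 < k" unfolding k_def using d B L by simp
      have "w * exp w \<le> k * Y (real (Lambda_tilde K \<Lambda>))"
        using elim False k unfolding threshold_def by (simp add: divide_le_eq mult.commute)
      then have "w \<le> lambertW (k * Y (real (Lambda_tilde K \<Lambda>)))" by (intro lambertW_ge) (simp_all add: w_def)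
      then have "t * k \<le> lambertW (k * Y (real (Lambda_tilde K \<Lambda>)))" unfolding w_def by simp
      then have "t \<le> (\<beta> + 1) / (\<beta> * d * L) * lambertW (k * Y (real (Lambda_tilde K \<Lambda>)))"
        using k B unfolding k_def by (simp add: field_simps)
      then show ?thesis using False h1 unfolding high_budget_b_def t_def L_def by simp
    qed
  qed
qed

section \<open>Rates\<close>

context
  fixes K :: nat and P :: "nat \<Rightarrow> nat \<Rightarrow> 'x set" and xr :: "nat \<Rightarrow> nat \<Rightarrow> 'x"
    and \<nu> \<rho> d C :: real and f :: "'x \<Rightarrow> real"
    and fz :: "real \<Rightarrow> 'x \<Rightarrow> real" and lam zc :: "real \<Rightarrow> real"
  assumes part: "hier_part K P xr"
    and par: "params_ok K \<nu> \<rho> d C"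
    and fS: "in_S K P \<nu> \<rho> d C f"
    and fid: "fidelities_ok lam zc"
begin

lemma regret_le_power:
  assumes bias: "bias_function f fz \<zeta>" and D: "d \<le> D" "0 < D" and Q: "1 \<le> Q"
    and M: "1 \<le> M" "ln x / (D * ln (1 / \<rho>)) \<le> M"
    and x: "real (Lambda_tilde K \<Lambda>) = x" "Q * M \<le> x"
    and levels: "\<And>H :: nat. real H \<le> M \<Longrightarrow> \<exists>j :: nat.
        4 * C * exp (real j) \<le> Q * exp (ln (1 / \<rho>) * real H * (D - d)) \<and>
        \<zeta> (zc (exp (real j))) \<le> \<nu> * \<rho> ^ H"
  shows "kometo_regret K fz zc xr f \<Lambda> \<le> 3 * \<nu> * exp (ln (1 / \<rho>)) * (Q * M / x) powr (1 / D) + 2 * \<zeta> (zc x)"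
proof -
  define H where "H = nat \<lfloor>ln (x / (Q * M)) / (D * ln (1 / \<rho>))\<rfloor>"
  have \<nu>: "0 < \<nu>" and \<rho>: "0 < \<rho>" "\<rho> < 1" and C: "1 < C" and d: "0 \<le> d"
    using par by (auto simp: params_ok_def)
  have HM: "real H \<le> M" and depth: "exp (ln (1 / \<rho>) * real H * D) \<le> x / (Q * M)"
    and \<rho>H: "\<rho> ^ H \<le> exp (ln (1 / \<rho>)) * (Q * M / x) powr (1 / D)"
    using depth_choice[OF \<rho> D(2) Q M x(2)] unfolding H_def by auto
  obtain j where j: "4 * C * exp (real j) \<le> Q * exp (ln (1 / \<rho>) * real H * (D - d))"
    and small_bias: "\<zeta> (zc (exp (real j))) \<le> \<nu> * \<rho> ^ H"
    using levels[OF HM] by blast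
  have budget: "4 * C * real H * exp (real j) * \<rho> powr (- d * real H) \<le> real (Lambda_tilde K \<Lambda>)"
    and ej: "exp (real j) \<le> real (Lambda_tilde K \<Lambda>)"
    using depth_budget_fits[OF \<rho> d D(1) C Q M(1) HM depth j] x(1) by auto
  then have Lt: "1 \<le> Lambda_tilde K \<Lambda>" using one_le_exp_iff[of "real j"] by linarith
  have "kometo_regret K fz zc xr f \<Lambda> \<le> 3 * \<nu> * \<rho> ^ H + 2 * \<zeta> (zc x)"
    using kometo_regret_le[OF part par fS fid bias Lt ej small_bias budget] x by simp
  also have "3 * \<nu> * \<rho> ^ H \<le> 3 * \<nu> * (exp (ln (1 / \<rho>)) * (Q * M / x) powr (1 / D))"
    using \<rho>H \<nu> by (intro mult_left_mono) auto
  finally show ?thesis by (simp add: mult.assoc)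
qed

lemma regret_rate_via_power:
  fixes Q G :: "real \<Rightarrow> real" and D m :: real
  assumes bias: "bias_function f fz \<zeta>" and D: "d \<le> D" "0 < D" and m: "0 \<le> m"
    and Q: "\<And>M. 1 \<le> M \<Longrightarrow> 1 \<le> Q M"
    and levels: "\<And>M H. 1 \<le> M \<Longrightarrow> real H \<le> M \<Longrightarrow> \<exists>j :: nat.
        4 * C * exp (real j) \<le> Q M * exp (ln (1 / \<rho>) * real H * (D - d)) \<and>
        \<zeta> (zc (exp (real j))) \<le> \<nu> * \<rho> ^ H"
    and large: "\<forall>\<^sub>F x in at_top. Q (ln x / (D * ln (1 / \<rho>)) + 1) * (ln x / (D * ln (1 / \<rho>)) + 1) \<le> x"
    and bias_rate: "\<forall>\<^sub>F x in at_top. \<zeta> (zc x) \<le> G x"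
    and rate: "(\<lambda>x. 3 * \<nu> * exp (ln (1 / \<rho>)) *
          (Q (ln x / (D * ln (1 / \<rho>)) + 1) * (ln x / (D * ln (1 / \<rho>)) + 1) / x) powr (1 / D) + 2 * G x)
        \<in> O(\<lambda>x. ln x powr m * x powr - (1 / D))"
  shows "Otilde_on S (kometo_regret K fz zc xr f) (\<lambda>\<Lambda>. \<Lambda> powr - (1 / D))"
proof -
  have \<rho>: "0 < \<rho>" "\<rho> < 1" and K: "1 \<le> K" using par by (auto simp: params_ok_def)
  define M where "M = (\<lambda>x::real. ln x / (D * ln (1 / \<rho>)) + 1)"
  have "\<forall>\<^sub>F x in at_top. 1 \<le> x \<and> Q (M x) * M x \<le> x \<and> \<zeta> (zc x) \<le> G x"
    using large bias_rate unfolding M_def by (intro eventually_conj eventually_ge_at_top)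
  then have "\<forall>\<^sub>F x in at_top. \<forall>\<Lambda>. real (Lambda_tilde K \<Lambda>) = x \<longrightarrow> kometo_regret K fz zc xr f \<Lambda>
      \<le> 3 * \<nu> * exp (ln (1 / \<rho>)) * (Q (M x) * M x / x) powr (1 / D) + 2 * G x"
  proof (elim eventually_mono, intro allI impI)
    fix x \<Lambda> assume "1 \<le> x \<and> Q (M x) * M x \<le> x \<and> \<zeta> (zc x) \<le> G x"
      and x: "real (Lambda_tilde K \<Lambda>) = x"
    then have x1: "1 \<le> x" and QM: "Q (M x) * M x \<le> x" and G: "\<zeta> (zc x) \<le> G x" by auto
    have M: "1 \<le> M x" "ln x / (D * ln (1 / \<rho>)) \<le> M x" using x1 D \<rho> unfolding M_def by simp_all
    have "kometo_regret K fz zc xr f \<Lambda>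
        \<le> 3 * \<nu> * exp (ln (1 / \<rho>)) * (Q (M x) * M x / x) powr (1 / D) + 2 * \<zeta> (zc x)"
      using levels[OF M(1)] by (intro regret_le_power[OF bias D Q[OF M(1)] M x QM]) blast
    then show "kometo_regret K fz zc xr f \<Lambda>
        \<le> 3 * \<nu> * exp (ln (1 / \<rho>)) * (Q (M x) * M x / x) powr (1 / D) + 2 * G x"
      using G by linarith
  qed
  then show ?thesis using rate m D unfolding M_def by (intro Otilde_on_via_Lambda_tilde[OF K]) auto
qed

lemma regret_rate_poly_bias:
  assumes A: "0 < A" "0 < \<alpha>" and F: "in_F (asm_a A \<alpha>) f fz zc"
  shows "Otilde_on S (kometo_regret K fz zc xr f) (\<lambda>\<Lambda>. \<Lambda> powr - (1 / (d + 1 / \<alpha>)))"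
proof -
  obtain \<zeta> where bias: "bias_function f fz \<zeta>" and \<Phi>: "\<forall>c\<ge>1. \<zeta> (zc c) \<le> A / c powr \<alpha>"
    using F unfolding in_F_iff asm_a_def by blast
  have \<nu>: "0 < \<nu>" and \<rho>: "0 < \<rho>" "\<rho> < 1" and C: "1 < C" and d: "0 \<le> d"
    using par by (auto simp: params_ok_def)
  define D where "D = d + 1 / \<alpha>"
  define Q where "Q = 4 * C * exp 1 * (max A \<nu> / \<nu>) powr (1 / \<alpha>)"
  have L: "0 < ln (1 / \<rho>)" using \<rho> by simp
  have D: "d \<le> D" "0 < D" using A d unfolding D_def by (auto intro: add_nonneg_pos)
  have "1 \<le> D * \<alpha>" using A d unfolding D_def by (simp add: distrib_right)
  then have D_\<alpha>: "1 / D \<le> \<alpha>" using D by (simp add: divide_le_eq mult.commute)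
  have "1 \<le> (max A \<nu> / \<nu>) powr (1 / \<alpha>)" using \<nu> A by (intro ge_one_powr_ge_zero) auto
  moreover have "1 \<le> 4 * C * exp 1" using mult_mono[of 1 "4 * C" 1 "exp 1"] C by simp
  ultimately have Q: "1 \<le> Q"
    unfolding Q_def using mult_mono[of 1 "4 * C * exp 1" 1 "(max A \<nu> / \<nu>) powr (1 / \<alpha>)"] by simp
  have "Otilde_on S (kometo_regret K fz zc xr f) (\<lambda>\<Lambda>. \<Lambda> powr - (1 / D))"
  proof (rule regret_rate_via_power[OF bias D, where Q = "\<lambda>_. Q" and G = "\<lambda>x. A * x powr - (1 / D)"
        and m = "1 / D"])
    show "\<exists>j :: nat. 4 * C * exp (real j) \<le> Q * exp (ln (1 / \<rho>) * real H * (D - d)) \<and>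
        \<zeta> (zc (exp (real j))) \<le> \<nu> * \<rho> ^ H" for H :: nat
    proof -
      obtain j :: nat where "\<zeta> (zc (exp (real j))) \<le> \<nu> * \<rho> ^ H"
        and "exp (real j) \<le> exp 1 * (max A \<nu> / \<nu>) powr (1 / \<alpha>) * exp (ln (1 / \<rho>) * real H / \<alpha>)"
        using exists_level_poly_bias[of "\<lambda>c. \<zeta> (zc c)", OF \<Phi> A \<nu> \<rho>] by blast
      moreover have "ln (1 / \<rho>) * real H / \<alpha> = ln (1 / \<rho>) * real H * (D - d)" unfolding D_def by simp
      ultimately show ?thesis using C unfolding Q_def by (auto simp: ac_simps)
    qed
    show "\<forall>\<^sub>F x in at_top. Q * (ln x / (D * ln (1 / \<rho>)) + 1) \<le> x" using Q D L by real_asymp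
    have "\<zeta> (zc x) \<le> A * x powr - (1 / D)" if "1 \<le> x" for x
    proof -
      have "\<zeta> (zc x) \<le> A / x powr \<alpha>" using \<Phi> that by simp
      also have "\<dots> \<le> A / x powr (1 / D)" using that D_\<alpha> A D by (intro divide_left_mono powr_mono) auto
      finally show ?thesis by (simp add: powr_minus_divide)
    qed
    then show "\<forall>\<^sub>F x in at_top. \<zeta> (zc x) \<le> A * x powr - (1 / D)"
      by (rule eventually_mono[OF eventually_ge_at_top[of 1]])
    show "(\<lambda>x. 3 * \<nu> * exp (ln (1 / \<rho>)) * (Q * (ln x / (D * ln (1 / \<rho>)) + 1) / x) powr (1 / D)
        + 2 * (A * x powr - (1 / D))) \<in> O(\<lambda>x. ln x powr (1 / D) * x powr - (1 / D))"
      using Q D L by real_asymp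
  qed (use Q D in auto)
  then show ?thesis unfolding D_def .
qed

lemma regret_rate_exp_bias_pos_dim:
  assumes B: "0 < B" "0 < \<beta>" "0 < \<sigma>" and F: "in_F (asm_b B \<beta> \<sigma>) f fz zc" and d: "0 < d"
  shows "Otilde_on S (kometo_regret K fz zc xr f) (\<lambda>\<Lambda>. \<Lambda> powr - (1 / d))"
proof -
  obtain \<zeta> where bias: "bias_function f fz \<zeta>" and \<Phi>: "\<forall>c\<ge>1. \<zeta> (zc c) \<le> B * exp (- (c powr \<beta>) / \<sigma>)"
    using F unfolding in_F_iff asm_b_def by blast
  have \<nu>: "0 < \<nu>" and \<rho>: "0 < \<rho>" "\<rho> < 1" and C: "1 < C"
    using par by (auto simp: params_ok_def)
  define L where "L = ln (1 / \<rho>)"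
  define l0 where "l0 = ln (max B \<nu> / \<nu>)"
  define Q where "Q = (\<lambda>M. 4 * C * exp 1 * (\<sigma> * (L * M + l0) + 1) powr (1 / \<beta>))"
  have L: "0 < L" unfolding L_def using \<rho> by simp
  have l0: "0 \<le> l0" unfolding l0_def using \<nu> by simp
  show ?thesis
  proof (rule regret_rate_via_power[OF bias order.refl d, where Q = Q and m = "1 / d * (1 / \<beta> + 1)"
        and G = "\<lambda>x. B * exp (- (x powr \<beta>) / \<sigma>)"])
    show "1 \<le> Q M" if "1 \<le> M" for M
    proof -
      have "1 \<le> (\<sigma> * (L * M + l0) + 1) powr (1 / \<beta>)"
        using that B L l0 by (intro ge_one_powr_ge_zero) auto
      moreover have "1 \<le> 4 * C * exp 1" using mult_mono[of 1 "4 * C" 1 "exp 1"] C by simp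
      ultimately show ?thesis
        unfolding Q_def using mult_mono[of 1 "4 * C * exp 1" 1 "(\<sigma> * (L * M + l0) + 1) powr (1 / \<beta>)"] by simp
    qed
    show "\<exists>j :: nat. 4 * C * exp (real j) \<le> Q M * exp (ln (1 / \<rho>) * real H * (d - d)) \<and>
        \<zeta> (zc (exp (real j))) \<le> \<nu> * \<rho> ^ H" if "real H \<le> M" for H :: nat and M
    proof -
      obtain j :: nat where small_bias: "\<zeta> (zc (exp (real j))) \<le> \<nu> * \<rho> ^ H"
        and j: "exp (real j) \<le> exp 1 * (\<sigma> * (L * real H + l0) + 1) powr (1 / \<beta>)"
        using exists_level_exp_bias[of "\<lambda>c. \<zeta> (zc c)", OF \<Phi> B \<nu> \<rho>] unfolding L_def l0_def by blast
      moreover have "(\<sigma> * (L * real H + l0) + 1) powr (1 / \<beta>) \<le> (\<sigma> * (L * M + l0) + 1) powr (1 / \<beta>)"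
        using that B L l0 by (intro powr_mono2) (auto intro!: mult_left_mono)
      ultimately have "exp (real j) \<le> exp 1 * (\<sigma> * (L * M + l0) + 1) powr (1 / \<beta>)"
        by (meson exp_gt_zero less_imp_le mult_left_mono order.trans)
      then show ?thesis using small_bias C unfolding Q_def by auto
    qed
    show "\<forall>\<^sub>F x in at_top. Q (ln x / (d * ln (1 / \<rho>)) + 1) * (ln x / (d * ln (1 / \<rho>)) + 1) \<le> x"
      unfolding Q_def L_def[symmetric] using C B L l0 d by real_asymp
    show "\<forall>\<^sub>F x in at_top. \<zeta> (zc x) \<le> B * exp (- (x powr \<beta>) / \<sigma>)"
      by (rule eventually_mono[OF eventually_ge_at_top[of 1]]) (use \<Phi> in simp)
    show "(\<lambda>x. 3 * \<nu> * exp (ln (1 / \<rho>)) *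
          (Q (ln x / (d * ln (1 / \<rho>)) + 1) * (ln x / (d * ln (1 / \<rho>)) + 1) / x) powr (1 / d)
        + 2 * (B * exp (- (x powr \<beta>) / \<sigma>))) \<in> O(\<lambda>x. ln x powr (1 / d * (1 / \<beta> + 1)) * x powr - (1 / d))"
      unfolding Q_def L_def[symmetric] using C B L l0 d by real_asymp
  qed (use d B in auto)
qed

lemma regret_rate_vanishing_bias_pos_dim:
  assumes a: "1 \<le> a" and F: "in_F (asm_c a) f fz zc" and d: "0 < d"
  shows "Otilde_on S (kometo_regret K fz zc xr f) (\<lambda>\<Lambda>. \<Lambda> powr - (1 / d))"
proof -
  obtain \<zeta> where bias: "bias_function f fz \<zeta>" and \<Phi>: "\<forall>c\<ge>a. \<zeta> (zc c) = 0"
    using F unfolding in_F_iff asm_c_def by blast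
  have \<nu>: "0 < \<nu>" and \<rho>: "0 < \<rho>" "\<rho> < 1" and C: "1 < C"
    using par by (auto simp: params_ok_def)
  define j0 :: nat where "j0 = nat \<lceil>ln a\<rceil>"
  define Q where "Q = 4 * C * exp (real j0)"
  have L: "0 < ln (1 / \<rho>)" using \<rho> by simp
  have j0: "a \<le> exp (real j0)" unfolding j0_def by (rule le_exp_nat_ceiling_ln[OF a])
  have Q: "1 \<le> Q" unfolding Q_def using mult_mono[of 1 "4 * C" 1 "exp (real j0)"] C by simp
  show ?thesis
  proof (rule regret_rate_via_power[OF bias order.refl d, where Q = "\<lambda>_. Q" and G = "\<lambda>_. 0"
        and m = "1 / d"])
    show "\<exists>j :: nat. 4 * C * exp (real j) \<le> Q * exp (ln (1 / \<rho>) * real H * (d - d)) \<and>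
        \<zeta> (zc (exp (real j))) \<le> \<nu> * \<rho> ^ H" for H :: nat
      using \<Phi> j0 \<nu> \<rho> unfolding Q_def by (intro exI[of _ j0]) simp
    show "\<forall>\<^sub>F x in at_top. Q * (ln x / (d * ln (1 / \<rho>)) + 1) \<le> x" using Q d L by real_asymp
    show "\<forall>\<^sub>F x in at_top. \<zeta> (zc x) \<le> 0"
      by (rule eventually_mono[OF eventually_ge_at_top[of a]]) (use \<Phi> in simp)
    show "(\<lambda>x. 3 * \<nu> * exp (ln (1 / \<rho>)) * (Q * (ln x / (d * ln (1 / \<rho>)) + 1) / x) powr (1 / d) + 2 * 0)
        \<in> O(\<lambda>x. ln x powr (1 / d) * x powr - (1 / d))"
      using Q d L by real_asymp
  qed (use Q d in auto)
qed

lemma regret_le_zero_dim: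
  assumes bias: "bias_function f fz \<zeta>" and d: "d = 0" and x: "real (Lambda_tilde K \<Lambda>) = x"
    and H: "1 \<le> H" and budget: "4 * C * real H * exp (real j) \<le> x"
    and small_bias: "\<zeta> (zc (exp (real j))) \<le> \<nu> * \<rho> ^ H"
  shows "kometo_regret K fz zc xr f \<Lambda> \<le> 3 * \<nu> * \<rho> ^ H + 2 * \<zeta> (zc x)"
proof -
  have \<rho>: "0 < \<rho>" and C: "1 < C" using par by (auto simp: params_ok_def)
  have "1 \<le> 4 * C * real H" using C H mult_mono[of 1 "4 * C" 1 "real H"] by simp
  then have "exp (real j) \<le> 4 * C * real H * exp (real j)"
    using mult_right_mono[of 1 "4 * C * real H" "exp (real j)"] by simp
  then have ej: "exp (real j) \<le> real (Lambda_tilde K \<Lambda>)" using budget x by linarith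
  then have Lt: "1 \<le> Lambda_tilde K \<Lambda>" using one_le_exp_iff[of "real j"] by linarith
  show ?thesis using kometo_regret_le[OF part par fS fid bias Lt ej small_bias] budget x d \<rho> by simp
qed

lemma regret_rate_vanishing_bias_zero_dim:
  assumes a: "1 \<le> a" and F: "in_F (asm_c a) f fz zc" and d: "d = 0"
  shows "expOtilde_on S (kometo_regret K fz zc xr f) (\<lambda>\<Lambda>. \<Lambda>)"
proof -
  obtain \<zeta> where bias: "bias_function f fz \<zeta>" and \<Phi>: "\<forall>c\<ge>a. \<zeta> (zc c) = 0"
    using F unfolding in_F_iff asm_c_def by blast
  have \<nu>: "0 < \<nu>" and \<rho>: "0 < \<rho>" "\<rho> < 1" and C: "1 < C" and K: "1 \<le> K"
    using par by (auto simp: params_ok_def)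
  define L where "L = ln (1 / \<rho>)"
  define j0 :: nat where "j0 = nat \<lceil>ln a\<rceil>"
  define E where "E = 4 * C * exp (real j0)"
  have L: "0 < L" unfolding L_def using \<rho> by simp
  have j0: "a \<le> exp (real j0)" unfolding j0_def by (rule le_exp_nat_ceiling_ln[OF a])
  have E: "exp (real j0) \<le> E" "0 < E" unfolding E_def using C by simp_all
  have "\<forall>\<^sub>F x in at_top. \<forall>\<Lambda>. real (Lambda_tilde K \<Lambda>) = x \<longrightarrow>
      kometo_regret K fz zc xr f \<Lambda> \<le> 3 * \<nu> * exp L * exp (- (L / E) * x powr 1)"
  proof (rule eventually_mono[OF eventually_ge_at_top[of E]], intro allI impI)
    fix x \<Lambda> assume xE: "E \<le> x" and x: "real (Lambda_tilde K \<Lambda>) = x"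
    define H where "H = nat \<lfloor>x / E\<rfloor>"
    have "1 \<le> x / E" using xE E by simp
    then have HE: "real H \<le> x / E" "x / E \<le> real H + 1" "1 \<le> H" unfolding H_def by linarith+
    have "kometo_regret K fz zc xr f \<Lambda> \<le> 3 * \<nu> * \<rho> ^ H + 2 * \<zeta> (zc x)"
      using HE(1) E \<Phi> \<nu> \<rho> j0 unfolding E_def
      by (intro regret_le_zero_dim[OF bias d x HE(3)]) (auto simp: field_simps)
    also have "\<zeta> (zc x) = 0" using \<Phi> j0 E xE by simp
    also have "\<rho> ^ H \<le> exp L * exp (- (L / E) * x powr 1)"
      using power_le_exp_ln_inverse[OF \<rho> HE(2)] xE E unfolding L_def by simp
    finally show "kometo_regret K fz zc xr f \<Lambda> \<le> 3 * \<nu> * exp L * exp (- (L / E) * x powr 1)"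
      using \<nu> by (simp add: mult.assoc)
  qed
  moreover have "\<forall>\<^sub>F \<Lambda> in at_top. (\<Lambda> :: real) \<le> \<Lambda> powr 1"
    unfolding eventually_at_top_linorder by (intro exI[of _ 0]) auto
  ultimately show ?thesis
    using L E \<nu> by (intro expOtilde_on_via_Lambda_tilde[OF K, where \<gamma> = 1 and c = "L / E"]) auto
qed

lemma regret_le_exp_bias_zero_dim:
  fixes B \<beta> \<sigma> x :: real
  defines "\<kappa> \<equiv> (4 * C * exp 1 * (2 * \<sigma> * ln (1 / \<rho>)) powr (1 / \<beta>)) powr - (\<beta> / (1 + \<beta>))"
  assumes bias: "bias_function f fz \<zeta>" and \<Phi>: "\<forall>c\<ge>1. \<zeta> (zc c) \<le> B * exp (- (c powr \<beta>) / \<sigma>)"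
    and B: "0 < B" "0 < \<beta>" "0 < \<sigma>" and d: "d = 0"
    and x: "real (Lambda_tilde K \<Lambda>) = x" "1 \<le> x" and deep: "1 \<le> \<kappa> * x powr (\<beta> / (1 + \<beta>))"
    and large: "\<sigma> * ln (max B \<nu> / \<nu>) + 1 \<le> \<sigma> * ln (1 / \<rho>) * (\<kappa> * x powr (\<beta> / (1 + \<beta>)))"
  shows "kometo_regret K fz zc xr f \<Lambda> \<le> 3 * \<nu> * exp (ln (1 / \<rho>))
           * exp (- ln (1 / \<rho>) * (\<kappa> * x powr (\<beta> / (1 + \<beta>))))
         + 2 * (B * exp (- (x powr (\<beta> / (1 + \<beta>))) / \<sigma>))"
proof -
  have \<nu>: "0 < \<nu>" and \<rho>: "0 < \<rho>" "\<rho> < 1" and C: "1 < C" using par by (auto simp: params_ok_def)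
  obtain H j :: nat where H: "1 \<le> H" "\<kappa> * x powr (\<beta> / (1 + \<beta>)) \<le> real H + 1"
    and budget: "4 * C * real H * exp (real j) \<le> x" and small_bias: "\<zeta> (zc (exp (real j))) \<le> \<nu> * \<rho> ^ H"
    using exists_depth_level_exp_bias[of "\<lambda>c. \<zeta> (zc c)", OF \<Phi> B \<nu> _ \<rho> _ deep[unfolded \<kappa>_def]
        large[unfolded \<kappa>_def]] C x unfolding \<kappa>_def by auto
  have "kometo_regret K fz zc xr f \<Lambda> \<le> 3 * \<nu> * \<rho> ^ H + 2 * \<zeta> (zc x)"
    by (rule regret_le_zero_dim[OF bias d x(1) H(1) budget small_bias])
  also have "\<rho> ^ H \<le> exp (ln (1 / \<rho>)) * exp (- ln (1 / \<rho>) * (\<kappa> * x powr (\<beta> / (1 + \<beta>))))"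
    by (rule power_le_exp_ln_inverse[OF \<rho> H(2)])
  also have "\<zeta> (zc x) \<le> B * exp (- (x powr (\<beta> / (1 + \<beta>))) / \<sigma>)"
  proof -
    have "x powr (\<beta> / (1 + \<beta>)) / \<sigma> \<le> x powr \<beta> / \<sigma>"
      using x(2) B by (intro divide_right_mono powr_mono) (auto simp: field_simps)
    then have "B * exp (- (x powr \<beta>) / \<sigma>) \<le> B * exp (- (x powr (\<beta> / (1 + \<beta>))) / \<sigma>)"
      using B by (intro mult_left_mono) auto
    then show ?thesis using \<Phi> x(2) by (meson order.trans)
  qed
  finally show ?thesis using \<nu> by (simp add: mult.assoc)
qed

lemma regret_rate_exp_bias_zero_dim:
  assumes B: "0 < B" "0 < \<beta>" "0 < \<sigma>" and F: "in_F (asm_b B \<beta> \<sigma>) f fz zc" and d: "d = 0"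
  shows "expOtilde_on S (kometo_regret K fz zc xr f) (\<lambda>\<Lambda>. \<Lambda> powr (\<beta> / (1 + \<beta>)))"
proof -
  obtain \<zeta> where bias: "bias_function f fz \<zeta>" and \<Phi>: "\<forall>c\<ge>1. \<zeta> (zc c) \<le> B * exp (- (c powr \<beta>) / \<sigma>)"
    using F unfolding in_F_iff asm_b_def by blast
  have \<nu>: "0 < \<nu>" and \<rho>: "0 < \<rho>" "\<rho> < 1" and C: "1 < C" and K: "1 \<le> K"
    using par by (auto simp: params_ok_def)
  define L where "L = ln (1 / \<rho>)"
  define \<gamma> where "\<gamma> = \<beta> / (1 + \<beta>)"
  define \<kappa> where "\<kappa> = (4 * C * exp 1 * (2 * \<sigma> * L) powr (1 / \<beta>)) powr - \<gamma>"
  define c where "c = min (L * \<kappa>) (1 / \<sigma>)"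
  have L: "0 < L" unfolding L_def using \<rho> by simp
  have \<gamma>: "0 < \<gamma>" "\<gamma> \<le> 1" unfolding \<gamma>_def using B by (auto simp: field_simps)
  have \<kappa>: "0 < \<kappa>" unfolding \<kappa>_def using C B L by simp
  have c: "0 < c" unfolding c_def using L \<kappa> B by simp
  have "\<forall>\<^sub>F x in at_top. 1 \<le> \<kappa> * x powr \<gamma>" using \<kappa> \<gamma> by real_asymp
  moreover have "\<forall>\<^sub>F x in at_top. \<sigma> * ln (max B \<nu> / \<nu>) + 1 \<le> \<sigma> * L * (\<kappa> * x powr \<gamma>)"
    using \<kappa> \<gamma> B L by real_asymp
  ultimately have "\<forall>\<^sub>F x in at_top. 1 \<le> x \<and> 1 \<le> \<kappa> * x powr \<gamma> \<and>
      \<sigma> * ln (max B \<nu> / \<nu>) + 1 \<le> \<sigma> * L * (\<kappa> * x powr \<gamma>)"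
    by (intro eventually_conj eventually_ge_at_top)
  then have "\<forall>\<^sub>F x in at_top. \<forall>\<Lambda>. real (Lambda_tilde K \<Lambda>) = x \<longrightarrow>
      kometo_regret K fz zc xr f \<Lambda> \<le> (3 * \<nu> * exp L + 2 * B) * exp (- c * x powr \<gamma>)"
  proof (elim eventually_mono, intro allI impI)
    fix x \<Lambda> assume "1 \<le> x \<and> 1 \<le> \<kappa> * x powr \<gamma> \<and> \<sigma> * ln (max B \<nu> / \<nu>) + 1 \<le> \<sigma> * L * (\<kappa> * x powr \<gamma>)"
      and x: "real (Lambda_tilde K \<Lambda>) = x"
    then have regret: "kometo_regret K fz zc xr f \<Lambda> \<le> 3 * \<nu> * exp L * exp (- L * (\<kappa> * x powr \<gamma>))
        + 2 * (B * exp (- (x powr \<gamma>) / \<sigma>))"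
      using regret_le_exp_bias_zero_dim[OF bias \<Phi> B d x] unfolding \<kappa>_def \<gamma>_def L_def by auto
    have "exp (- L * (\<kappa> * x powr \<gamma>)) \<le> exp (- c * x powr \<gamma>)"
      using mult_right_mono[of c "L * \<kappa>" "x powr \<gamma>"] unfolding c_def by (simp add: mult.assoc)
    then have "3 * \<nu> * exp L * exp (- L * (\<kappa> * x powr \<gamma>)) \<le> 3 * \<nu> * exp L * exp (- c * x powr \<gamma>)"
      using \<nu> by (intro mult_left_mono) auto
    moreover have "exp (- (x powr \<gamma>) / \<sigma>) \<le> exp (- c * x powr \<gamma>)"
      using mult_right_mono[of c "1 / \<sigma>" "x powr \<gamma>"] unfolding c_def by simp
    then have "2 * (B * exp (- (x powr \<gamma>) / \<sigma>)) \<le> 2 * (B * exp (- c * x powr \<gamma>))"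
      using B by (intro mult_left_mono) auto
    ultimately have "kometo_regret K fz zc xr f \<Lambda>
        \<le> 3 * \<nu> * exp L * exp (- c * x powr \<gamma>) + 2 * (B * exp (- c * x powr \<gamma>))"
      using regret by linarith
    then show "kometo_regret K fz zc xr f \<Lambda> \<le> (3 * \<nu> * exp L + 2 * B) * exp (- c * x powr \<gamma>)"
      by (simp add: algebra_simps)
  qed
  moreover have "\<forall>\<^sub>F \<Lambda> in at_top. (\<Lambda> :: real) powr \<gamma> \<le> \<Lambda> powr \<gamma>" by simp
  ultimately show ?thesis
    using \<nu> B c \<gamma> unfolding \<gamma>_def by (intro expOtilde_on_via_Lambda_tilde[OF K]) auto
qed

lemma regret_rates_asm_a:
  assumes A: "0 < A" "0 < \<alpha>" and F: "in_F (asm_a A \<alpha>) f fz zc"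
  shows "let Hi = {\<Lambda>. high_budget_a K \<nu> \<rho> d C A \<alpha> \<Lambda>};
             Lo = {\<Lambda>. \<not> high_budget_a K \<nu> \<rho> d C A \<alpha> \<Lambda>} in
          (d = 0 \<longrightarrow> Otilde_on Hi (kometo_regret K fz zc xr f) (\<lambda>\<Lambda>. \<Lambda> powr (- \<alpha>)) \<and>
                     Otilde_on Lo (kometo_regret K fz zc xr f) (\<lambda>\<Lambda>. \<Lambda> powr (- \<alpha>))) \<and>
          (d > 0 \<longrightarrow> Otilde_on Hi (kometo_regret K fz zc xr f) (\<lambda>\<Lambda>. \<Lambda> powr (- 1 / (d + 1 / \<alpha>))) \<and>
                     Otilde_on Lo (kometo_regret K fz zc xr f) (\<lambda>\<Lambda>. \<Lambda> powr (- 1 / d) + \<Lambda> powr (- \<alpha>)))"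
  using regret_rate_poly_bias[OF A F]
    Otilde_on_eventually_empty[OF eventually_mono[OF eventually_high_budget_a[OF par A]]]
  unfolding Let_def by auto

lemma regret_rates_asm_b:
  assumes B: "0 < B" "0 < \<beta>" "0 < \<sigma>" and F: "in_F (asm_b B \<beta> \<sigma>) f fz zc"
  shows "let Hi = {\<Lambda>. high_budget_b K \<nu> \<rho> d C B \<beta> \<sigma> \<Lambda>};
             Lo = {\<Lambda>. \<not> high_budget_b K \<nu> \<rho> d C B \<beta> \<sigma> \<Lambda>} in
          (d = 0 \<longrightarrow> expOtilde_on Hi (kometo_regret K fz zc xr f) (\<lambda>\<Lambda>. \<Lambda> powr (\<beta> / (1 + \<beta>))) \<and>
                     expOtilde2_on Lo (kometo_regret K fz zc xr f) (\<lambda>\<Lambda>. \<Lambda> powr \<beta>) (\<lambda>\<Lambda>. \<Lambda>)) \<and>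
          (d > 0 \<longrightarrow> Otilde_on Hi (kometo_regret K fz zc xr f) (\<lambda>\<Lambda>. \<Lambda> powr (- 1 / d)) \<and>
                     Otilde_on Lo (kometo_regret K fz zc xr f) (\<lambda>\<Lambda>. \<Lambda> powr (- 1 / d)))"
  using regret_rate_exp_bias_zero_dim[OF B F] regret_rate_exp_bias_pos_dim[OF B F]
    expOtilde2_on_eventually_empty[OF eventually_mono[OF eventually_high_budget_b[OF par B]]]
  unfolding Let_def by auto

lemma regret_rates_asm_c:
  assumes a: "1 \<le> a" and F: "in_F (asm_c a) f fz zc"
  shows "(d = 0 \<longrightarrow> expOtilde_on UNIV (kometo_regret K fz zc xr f) (\<lambda>\<Lambda>. \<Lambda>)) \<and>
         (d > 0 \<longrightarrow> Otilde_on UNIV (kometo_regret K fz zc xr f) (\<lambda>\<Lambda>. \<Lambda> powr (- 1 / d)))"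
  using regret_rate_vanishing_bias_zero_dim[OF a F] regret_rate_vanishing_bias_pos_dim[OF a F]
  by auto

end

theorem corollary4:
  fixes K :: nat and P :: "nat \<Rightarrow> nat \<Rightarrow> 'x set" and xr :: "nat \<Rightarrow> nat \<Rightarrow> 'x"
    and \<nu> \<rho> d C :: real and f :: "'x \<Rightarrow> real"
    and fz :: "real \<Rightarrow> 'x \<Rightarrow> real" and lam zc :: "real \<Rightarrow> real"
  assumes part: "hier_part K P xr"
    and par: "params_ok K \<nu> \<rho> d C"
    and fS: "in_S K P \<nu> \<rho> d C f"
    and fid: "fidelities_ok lam zc"
  defines "r \<equiv> kometo_regret K fz zc xr f"
  shows
    "(\<forall>A \<alpha>. A > 0 \<and> \<alpha> > 0 \<and> in_F (asm_a A \<alpha>) f fz zc \<longrightarrow>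
        (let Hi = {\<Lambda>. high_budget_a K \<nu> \<rho> d C A \<alpha> \<Lambda>};
             Lo = {\<Lambda>. \<not> high_budget_a K \<nu> \<rho> d C A \<alpha> \<Lambda>} in
          (d = 0 \<longrightarrow> Otilde_on Hi r (\<lambda>\<Lambda>. \<Lambda> powr (- \<alpha>)) \<and> Otilde_on Lo r (\<lambda>\<Lambda>. \<Lambda> powr (- \<alpha>))) \<and>
          (d > 0 \<longrightarrow> Otilde_on Hi r (\<lambda>\<Lambda>. \<Lambda> powr (- 1 / (d + 1 / \<alpha>))) \<and>
                     Otilde_on Lo r (\<lambda>\<Lambda>. \<Lambda> powr (- 1 / d) + \<Lambda> powr (- \<alpha>))))) \<and>
     (\<forall>B \<beta> \<sigma>. B > 0 \<and> \<beta> > 0 \<and> \<sigma> > 0 \<and> in_F (asm_b B \<beta> \<sigma>) f fz zc \<longrightarrow>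
        (let Hi = {\<Lambda>. high_budget_b K \<nu> \<rho> d C B \<beta> \<sigma> \<Lambda>};
             Lo = {\<Lambda>. \<not> high_budget_b K \<nu> \<rho> d C B \<beta> \<sigma> \<Lambda>} in
          (d = 0 \<longrightarrow> expOtilde_on Hi r (\<lambda>\<Lambda>. \<Lambda> powr (\<beta> / (1 + \<beta>))) \<and>
                     expOtilde2_on Lo r (\<lambda>\<Lambda>. \<Lambda> powr \<beta>) (\<lambda>\<Lambda>. \<Lambda>)) \<and>
          (d > 0 \<longrightarrow> Otilde_on Hi r (\<lambda>\<Lambda>. \<Lambda> powr (- 1 / d)) \<and>
                     Otilde_on Lo r (\<lambda>\<Lambda>. \<Lambda> powr (- 1 / d))))) \<and>
     (\<forall>a. a \<ge> 1 \<and> in_F (asm_c a) f fz zc \<longrightarrow>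
          (d = 0 \<longrightarrow> expOtilde_on UNIV r (\<lambda>\<Lambda>. \<Lambda>)) \<and>
          (d > 0 \<longrightarrow> Otilde_on UNIV r (\<lambda>\<Lambda>. \<Lambda> powr (- 1 / d))))"
  unfolding r_def
  using regret_rates_asm_a[OF part par fS fid] regret_rates_asm_b[OF part par fS fid]
    regret_rates_asm_c[OF part par fS fid]
  by blast

end
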